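(* Let $q$ be a prime power, $0\le k\le n$, and let $X\in\mathcal{G}_q(n,k)$ with $\mathrm{EXT}(X)=\begin{pmatrix} v_n&\cdots&v_2&v_1\\ X_n&\cdots&X_2&X_1\end{pmatrix}$. For $0\le j\le n$ let $w_j=\sum_{\ell=1}^{j}v_\ell$ (so $w_0=0$). Then the number $\mathrm{I}_{\mathrm{EXT}}(X)$ of subspaces $Y\in\mathcal{G}_q(n,k)$ with $Y<X$ in the extended-representation order is \[\mathrm{I}_{\mathrm{EXT}}(X)=\sum_{j=1}^{n}\Bigl(v_j\,q^{k-w_{j-1}}+(1-v_j)\frac{\{X_j\}}{q^{w_{j-1}}}\Bigr)\left[\begin{smallmatrix} n-j\\ k-w_{j-1}\end{smallmatrix}\right]_q .\]
   Context: $\mathbb{F}_q$ is the finite field of size $q$; its elements are identified with $\mathbb{Z}_q=\{0,\dots,q-1\}$ by a fixed bijection (with $0\mapsto0$, $1\mapsto1$). $\mathcal{G}_q(n,k)$ is the set of all $k$-dimensional subspaces of $\mathbb{F}_q^n$. The Gaussian coefficient is $\left[\begin{smallmatrix} n\\ k\end{smallmatrix}\right]_q=\prod_{i=0}^{k-1}\frac{q^{n-i}-1}{q^{k-i}-1}$, with $\left[\begin{smallmatrix} n\\ 0\end{smallmatrix}\right]_q=1$ and value $0$ if $k>n$ or $k<0$. For $X\in\mathcal{G}_q(n,k)$, $\mathrm{RE}(X)$ is the unique $k\times n$ reduced row echelon matrix whose rows span $X$, with columns labelled $X_n,\dots,X_1$ from left to right. The identifying vector $v(X)=(v_n,\dots,v_1)$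 is binary with $v_i=1$ iff column $X_i$ contains a row's leading one. $\mathrm{EXT}(X)$ is the $(k+1)\times n$ matrix with top row $v(X)$ above $\mathrm{RE}(X)$; its $i$-th column is $\binom{v_i}{X_i}$. For a $q$-ary vector $y=(y_1,\dots,y_r)$ (as a column, $y_1$ on top), $\{y\}=\sum_{t=1}^{r}y_tq^{r-t}$ is its value as a base-$q$ number with $y_1$ most significant. Order on $\mathcal{G}_q(n,k)$: $X<Y$ if, for the least index $i$ such that the $i$-th columns of $\mathrm{EXT}(X)$ and $\mathrm{EXT}(Y)$ differ, $\left\{\binom{v(X)_i}{X_i}\right\}<\left\{\binom{v(Y)_i}{Y_i}\right\}$. *)

theory Defs
  imports Complex_Main
begin

text \<open>Vectors of F_q^n are functions nat => 'a whose coordinates are indexed by the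
column labels 1..n (label n is the leftmost column), zero elsewhere.
A k x n matrix is a function M r i, row r in 1..k (top to bottom), column label i in 1..n.\<close>

definition Fn :: "nat \<Rightarrow> (nat \<Rightarrow> 'a::field) set" where
  "Fn n = {x. \<forall>i. (i < 1 \<or> i > n) \<longrightarrow> x i = 0}"

definition rowspan :: "nat \<Rightarrow> (nat \<Rightarrow> nat \<Rightarrow> 'a::field) \<Rightarrow> (nat \<Rightarrow> 'a) set" where
  "rowspan k M = {x. \<exists>c. x = (\<lambda>i. \<Sum>r\<in>{1..k}. c r * M r i)}"

definition lin_indep :: "nat \<Rightarrow> (nat \<Rightarrow> nat \<Rightarrow> 'a::field) \<Rightarrow> bool" where
  "lin_indep k B = (\<forall>c. (\<lambda>i. \<Sum>r\<in>{1..k}. c r * B r i) = (\<lambda>i. 0) \<longrightarrow> (\<forall>r\<in>{1..k}. c r = 0))"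

definition Gq :: "nat \<Rightarrow> nat \<Rightarrow> (nat \<Rightarrow> 'a::field) set set" where
  "Gq n k = {rowspan k B | B. (\<forall>r\<in>{1..k}. B r \<in> Fn n) \<and> lin_indep k B}"

text \<open>Reduced row echelon form (columns labelled n..1 left to right, so the leading
one of a row is its nonzero entry of largest label).\<close>
definition is_RREF :: "nat \<Rightarrow> nat \<Rightarrow> (nat \<Rightarrow> nat \<Rightarrow> 'a::field) \<Rightarrow> bool" where
  "is_RREF n k M =
    ((\<forall>r i. (r \<notin> {1..k} \<or> i \<notin> {1..n}) \<longrightarrow> M r i = 0) \<and>
     (\<exists>ld. (\<forall>r\<in>{1..k}. ld r \<in> {1..n} \<and> M r (ld r) = 1 \<and> (\<forall>i. i > ld r \<longrightarrow> M r i = 0)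
                 \<and> (\<forall>r'\<in>{1..k}. r' \<noteq> r \<longrightarrow> M r' (ld r) = 0))
          \<and> (\<forall>r\<in>{1..k}. \<forall>r'\<in>{1..k}. r < r' \<longrightarrow> ld r' < ld r)))"

definition RE :: "nat \<Rightarrow> nat \<Rightarrow> (nat \<Rightarrow> 'a::field) set \<Rightarrow> nat \<Rightarrow> nat \<Rightarrow> 'a" where
  "RE n k X = (THE M. is_RREF n k M \<and> rowspan k M = X)"

definition vvec :: "nat \<Rightarrow> nat \<Rightarrow> (nat \<Rightarrow> 'a::field) set \<Rightarrow> nat \<Rightarrow> nat" where
  "vvec n k X i = (if \<exists>r\<in>{1..k}. RE n k X r i = 1 \<and> (\<forall>i'. i' > i \<longrightarrow> RE n k X r i' = 0)
                   then 1 else 0)"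

definition wsum :: "nat \<Rightarrow> nat \<Rightarrow> (nat \<Rightarrow> 'a::field) set \<Rightarrow> nat \<Rightarrow> nat" where
  "wsum n k X j = (\<Sum>l\<in>{1..j}. vvec n k X l)"

text \<open>{X_i}: value of column X_i of RE(X) as a base-q number (top entry most significant),
via the fixed bijection enc : F_q -> Z_q.\<close>
definition colX_val :: "nat \<Rightarrow> ('a::field \<Rightarrow> nat) \<Rightarrow> nat \<Rightarrow> nat \<Rightarrow> (nat \<Rightarrow> 'a) set \<Rightarrow> nat \<Rightarrow> nat" where
  "colX_val q enc n k X i = (\<Sum>t\<in>{1..k}. enc (RE n k X t i) * q ^ (k - t))"

definition ext_colval :: "nat \<Rightarrow> ('a::field \<Rightarrow> nat) \<Rightarrow> nat \<Rightarrow> nat \<Rightarrow> (nat \<Rightarrow> 'a) set \<Rightarrow> nat \<Rightarrow> nat" where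
  "ext_colval q enc n k X i = vvec n k X i * q ^ k + colX_val q enc n k X i"

definition ext_col_differ :: "nat \<Rightarrow> nat \<Rightarrow> (nat \<Rightarrow> 'a::field) set \<Rightarrow> (nat \<Rightarrow> 'a) set \<Rightarrow> nat \<Rightarrow> bool" where
  "ext_col_differ n k X Y i =
     (vvec n k X i \<noteq> vvec n k Y i \<or> (\<exists>t\<in>{1..k}. RE n k X t i \<noteq> RE n k Y t i))"

definition ext_less :: "nat \<Rightarrow> ('a::field \<Rightarrow> nat) \<Rightarrow> nat \<Rightarrow> nat \<Rightarrow> (nat \<Rightarrow> 'a) set \<Rightarrow> (nat \<Rightarrow> 'a) set \<Rightarrow> bool" where
  "ext_less q enc n k X Y =
     (\<exists>i\<in>{1..n}. ext_col_differ n k X Y i \<and> (\<forall>i'\<in>{1..<i}. \<not> ext_col_differ n k X Y i')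
        \<and> ext_colval q enc n k X i < ext_colval q enc n k Y i)"

definition gauss :: "nat \<Rightarrow> nat \<Rightarrow> int \<Rightarrow> real" where
  "gauss q m k = (if k < 0 \<or> k > int m then 0
                  else (\<Prod>i<nat k. (real q ^ (m - i) - 1) / (real q ^ (nat k - i) - 1)))"

end

theory Submission
  imports Defs "HOL-Library.FuncSet"
begin

text \<open>Every subspace is the row space of a unique reduced row echelon (RREF) matrix, so we count
RREF matrices. The order compares the column X_1 first, so we recurse on n by deleting that column.
If X_1 is not a pivot column, it is an arbitrary vector of F_q^k and the remaining columns form an
RREF matrix of rank k; if it is a pivot column, it is the unit vector e_k (whose extended value
q^k + 1 is the largest possible), row k vanishes elsewhere, and the remaining columns form an RREF
matrix of rank k - 1 whose column values lose a factor q. Hence Y < X iff either Y_1 is a non-pivot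
column of smaller value, which leaves min({v_1 X_1}, q^k) choices for Y_1 and [n-1, k]_q for the
rest, or Y_1 = X_1 and the truncated matrices compare. Unrolling this recursion gives the formula.\<close>

section \<open>Reduced row echelon matrices\<close>

definition in_box :: "nat \<Rightarrow> nat \<Rightarrow> (nat \<Rightarrow> nat \<Rightarrow> 'a::field) \<Rightarrow> bool" where
 "in_box n k M = (\<forall>r i. (r \<notin> {1..k} \<or> i \<notin> {1..n}) \<longrightarrow> M r i = 0)"
definition pivots :: "nat \<Rightarrow> nat \<Rightarrow> (nat \<Rightarrow> nat \<Rightarrow> 'a::field) \<Rightarrow> (nat \<Rightarrow> nat) \<Rightarrow> bool" where
 "pivots n k M ld = ((\<forall>r\<in>{1..k}. ld r \<in> {1..n} \<and> M r (ld r) = 1 \<and> (\<forall>i. i > ld r \<longrightarrow> M r i = 0)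
     \<and> (\<forall>r'\<in>{1..k}. r' \<noteq> r \<longrightarrow> M r' (ld r) = 0)) \<and> (\<forall>r\<in>{1..k}. \<forall>r'\<in>{1..k}. r < r' \<longrightarrow> ld r' < ld r))"

lemma is_RREF_iff: "is_RREF n k M \<longleftrightarrow> in_box n k M \<and> (\<exists>ld. pivots n k M ld)"
  unfolding is_RREF_def in_box_def pivots_def by blast

definition rrefs :: "nat \<Rightarrow> nat \<Rightarrow> (nat \<Rightarrow> nat \<Rightarrow> 'a::field) set" where
  "rrefs n k = {M. is_RREF n k M}"

lemma rrefs_iff: "M \<in> rrefs n k \<longleftrightarrow> in_box n k M \<and> (\<exists>ld. pivots n k M ld)"
  unfolding rrefs_def is_RREF_iff by simp

definition pivot_flag :: "nat \<Rightarrow> (nat \<Rightarrow> nat \<Rightarrow> 'a::field) \<Rightarrow> nat \<Rightarrow> nat" where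
  "pivot_flag k M i = (if \<exists>r\<in>{1..k}. M r i = 1 \<and> (\<forall>i'. i' > i \<longrightarrow> M r i' = 0) then 1 else 0)"

lemma pivots_leading_one:
  assumes "pivots n k M ld" "r \<in> {1..k}" "M r i = 1" "\<forall>i'. i' > i \<longrightarrow> M r i' = 0"
  shows "i = ld r"
proof -
  have a: "M r (ld r) = 1" "\<forall>i. i > ld r \<longrightarrow> M r i = 0" using assms(1,2) unfolding pivots_def by auto
  show ?thesis
  proof (rule ccontr)
    assume "i \<noteq> ld r"
    then consider "i < ld r" | "i > ld r" by linarith
    then show False using a assms(3,4) by (metis zero_neq_one)
  qed
qed

lemma pivot_flag_eq:
  assumes "pivots n k M ld"
  shows "pivot_flag k M i = (if \<exists>r\<in>{1..k}. ld r = i then 1 else 0)"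
proof -
  have "(\<exists>r\<in>{1..k}. M r i = 1 \<and> (\<forall>i'. i' > i \<longrightarrow> M r i' = 0)) \<longleftrightarrow> (\<exists>r\<in>{1..k}. ld r = i)"
    using pivots_leading_one[OF assms] assms unfolding pivots_def by blast
  then show ?thesis unfolding pivot_flag_def by simp
qed

lemma pivot_flag_cases: "pivot_flag k M i = 0 \<or> pivot_flag k M i = 1" unfolding pivot_flag_def by auto

lemma pivots_decreasing: "pivots n k M ld \<Longrightarrow> r \<in> {1..k} \<Longrightarrow> r' \<in> {1..k} \<Longrightarrow> r < r' \<Longrightarrow> ld r' < ld r"
  unfolding pivots_def by blast

lemma pivots_row: "pivots n k M ld \<Longrightarrow> r \<in> {1..k} \<Longrightarrow> ld r \<in> {1..n} \<and> M r (ld r) = 1 \<and> (\<forall>i. i > ld r \<longrightarrow> M r i = 0)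
     \<and> (\<forall>r'\<in>{1..k}. r' \<noteq> r \<longrightarrow> M r' (ld r) = 0)"
  unfolding pivots_def by blast

section \<open>Deleting the first column\<close>

definition drop_col1 :: "(nat \<Rightarrow> nat \<Rightarrow> 'a::zero) \<Rightarrow> nat \<Rightarrow> nat \<Rightarrow> 'a" where
 "drop_col1 M = (\<lambda>r i. if i = 0 then 0 else M r (Suc i))"
definition cons_col1 :: "(nat \<Rightarrow> 'a::zero) \<Rightarrow> (nat \<Rightarrow> nat \<Rightarrow> 'a) \<Rightarrow> nat \<Rightarrow> nat \<Rightarrow> 'a" where
 "cons_col1 c M = (\<lambda>r i. if i = 0 then 0 else if i = 1 then c r else M r (i - 1))"
definition cons_pivot_col1 :: "nat \<Rightarrow> (nat \<Rightarrow> nat \<Rightarrow> 'a::{zero,one}) \<Rightarrow> nat \<Rightarrow> nat \<Rightarrow> 'a" where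
 "cons_pivot_col1 k M = (\<lambda>r i. if i = 0 then 0 else if i = 1 then (if r = k then 1 else 0) else M r (i - 1))"
definition col1 :: "(nat \<Rightarrow> nat \<Rightarrow> 'a) \<Rightarrow> nat \<Rightarrow> 'a" where "col1 M = (\<lambda>r. M r 1)"
definition col_vectors :: "nat \<Rightarrow> (nat \<Rightarrow> 'a::zero) set" where "col_vectors k = {c. \<forall>r. r \<notin> {1..k} \<longrightarrow> c r = 0}"

lemma drop_col1_nonpivot:
  assumes B: "in_box (Suc n) k M" and L: "pivots (Suc n) k M ld" and v: "pivot_flag k M 1 = 0"
  shows "in_box n k (drop_col1 M)" "pivots n k (drop_col1 M) (\<lambda>r. ld r - 1)" "\<forall>r\<in>{1..k}. ld r \<ge> 2"
proof -
  have ge: "\<forall>r\<in>{1..k}. ld r \<ge> 2"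
  proof
    fix r assume r: "r \<in> {1..k}"
    have "ld r \<noteq> 1" using v pivot_flag_eq[OF L, of 1] r by (auto split: if_splits)
    moreover have "ld r \<ge> 1" using pivots_row[OF L r] by auto
    ultimately show "ld r \<ge> 2" by linarith
  qed
  then show "\<forall>r\<in>{1..k}. ld r \<ge> 2" .
  show "in_box n k (drop_col1 M)" using B unfolding in_box_def drop_col1_def by auto
  show "pivots n k (drop_col1 M) (\<lambda>r. ld r - 1)"
    unfolding pivots_def
  proof (intro conjI ballI allI impI)
    fix r assume r: "r \<in> {1..k}"
    note R = pivots_row[OF L r]
    have g: "ld r \<ge> 2" using ge r by blast
    show "ld r - 1 \<in> {1..n}" using R g by auto
    show "drop_col1 M r (ld r - 1) = 1" using R g unfolding drop_col1_def by (simp add: Suc_diff_1)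
    show "\<And>i. i > ld r - 1 \<Longrightarrow> drop_col1 M r i = 0" using R g unfolding drop_col1_def by auto
    show "\<And>r'. r' \<in> {1..k} \<Longrightarrow> r' \<noteq> r \<Longrightarrow> drop_col1 M r' (ld r - 1) = 0" using R g unfolding drop_col1_def
      by (simp add: Suc_diff_1)
  next
    fix r r' assume "r \<in> {1..k}" "r' \<in> {1..k}" "r < r'"
    then have "ld r' < ld r" "ld r' \<ge> 2" using pivots_decreasing[OF L] ge by auto
    then show "ld r' - 1 < ld r - 1" by linarith
  qed
qed

lemma pivot_col1_shape:
  assumes B: "in_box (Suc n) k M" and L: "pivots (Suc n) k M ld" and v: "pivot_flag k M 1 = 1"
  shows "k \<ge> 1" "ld k = 1" "\<forall>r\<in>{1..<k}. ld r \<ge> 2" "\<forall>i. M k i = (if i = 1 then 1 else 0)"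
     "\<forall>r. r \<noteq> k \<longrightarrow> M r 1 = 0"
proof -
  have "\<exists>r\<in>{1..k}. ld r = 1" using v pivot_flag_eq[OF L, of 1] by (metis zero_neq_one)
  then obtain r0 where r0: "r0 \<in> {1..k}" "ld r0 = 1" by blast
  show k1: "k \<ge> 1" using r0 by auto
  have "r0 = k"
  proof (rule ccontr)
    assume "r0 \<noteq> k"
    then have "ld k < ld r0" using pivots_decreasing[OF L, of r0 k] r0 k1 by auto
    moreover have "ld k \<ge> 1" using pivots_row[OF L, of k] k1 by auto
    ultimately show False using r0 by auto
  qed
  then show ldk: "ld k = 1" using r0 by simp
  show "\<forall>r\<in>{1..<k}. ld r \<ge> 2"
  proof
    fix r assume r: "r \<in> {1..<k}"
    have "ld k < ld r" using pivots_decreasing[OF L, of r k] r k1 by auto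
    then show "ld r \<ge> 2" using ldk by simp
  qed
  have Rk: "M k 1 = 1" "\<forall>i. i > 1 \<longrightarrow> M k i = 0" "\<forall>r'\<in>{1..k}. r' \<noteq> k \<longrightarrow> M r' 1 = 0"
    using pivots_row[OF L, of k] k1 ldk by auto
  have "M k 0 = 0" using B unfolding in_box_def by auto
  then show "\<forall>i. M k i = (if i = 1 then 1 else 0)"
    using Rk by (metis less_one nat_neq_iff)
  show "\<forall>r. r \<noteq> k \<longrightarrow> M r 1 = 0" using Rk B unfolding in_box_def by auto
qed

lemma drop_col1_pivot:
  assumes B: "in_box (Suc n) k M" and L: "pivots (Suc n) k M ld" and v: "pivot_flag k M 1 = 1"
  shows "in_box n (k-1) (drop_col1 M)" "pivots n (k-1) (drop_col1 M) (\<lambda>r. ld r - 1)"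
proof -
  note S = pivot_col1_shape[OF B L v]
  show "in_box n (k-1) (drop_col1 M)" unfolding in_box_def
  proof (intro allI impI)
    fix r i assume a: "r \<notin> {1..k-1} \<or> i \<notin> {1..n}"
    show "drop_col1 M r i = 0"
    proof (cases "i = 0")
      case True then show ?thesis unfolding drop_col1_def by simp
    next
      case False
      then have "r \<notin> {1..k} \<or> Suc i \<notin> {1..Suc n} \<or> r = k" using a by auto
      then have "M r (Suc i) = 0" using B S(4) False unfolding in_box_def by auto
      then show ?thesis using False unfolding drop_col1_def by simp
    qed
  qed
  show "pivots n (k-1) (drop_col1 M) (\<lambda>r. ld r - 1)"
    unfolding pivots_def
  proof (intro conjI ballI allI impI)
    fix r assume r: "r \<in> {1..k-1}"
    then have rk: "r \<in> {1..k}" by auto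
    note R = pivots_row[OF L rk]
    have g: "ld r \<ge> 2" using S(3) r by auto
    show "ld r - 1 \<in> {1..n}" using R g by auto
    show "drop_col1 M r (ld r - 1) = 1" using R g unfolding drop_col1_def by (simp add: Suc_diff_1)
    show "\<And>i. i > ld r - 1 \<Longrightarrow> drop_col1 M r i = 0" using R g unfolding drop_col1_def by auto
    fix r' assume "r' \<in> {1..k-1}" "r' \<noteq> r"
    then have "M r' (ld r) = 0" using R by auto
    then show "drop_col1 M r' (ld r - 1) = 0" using g unfolding drop_col1_def by (simp add: Suc_diff_1)
  next
    fix r r' assume a: "r \<in> {1..k-1}" "r' \<in> {1..k-1}" "r < r'"
    have "ld r' < ld r" using pivots_decreasing[OF L, of r r'] a by auto
    moreover have "ld r' \<ge> 2" using S(3) a by auto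
    ultimately show "ld r' - 1 < ld r - 1" by linarith
  qed
qed

lemma drop_col1_rrefs:
  assumes "M \<in> rrefs (Suc n) k"
  shows "drop_col1 M \<in> rrefs n (k - pivot_flag k M 1)"
proof -
  obtain ld where B: "in_box (Suc n) k M" and L: "pivots (Suc n) k M ld" using assms unfolding rrefs_iff by blast
  show ?thesis
  proof (cases "pivot_flag k M 1 = 0")
    case True then show ?thesis using drop_col1_nonpivot[OF B L True] unfolding rrefs_iff by auto
  next
    case False then have "pivot_flag k M 1 = 1" by (metis pivot_flag_cases)
    then show ?thesis using drop_col1_pivot[OF B L] unfolding rrefs_iff by auto
  qed
qed

lemma col1_in_col_vectors: "in_box (Suc n) k M \<Longrightarrow> col1 M \<in> col_vectors k"
  unfolding in_box_def col1_def col_vectors_def by simp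

lemma col1_cons_col1 [simp]: "col1 (cons_col1 c M) = c"
  unfolding col1_def cons_col1_def by simp

lemma drop_col1_cons_col1: "in_box n k M \<Longrightarrow> drop_col1 (cons_col1 c M) = M"
  unfolding in_box_def drop_col1_def cons_col1_def by (auto intro!: ext)

lemma drop_col1_cons_pivot_col1: "in_box n k M \<Longrightarrow> drop_col1 (cons_pivot_col1 k' M) = M"
  unfolding in_box_def drop_col1_def cons_pivot_col1_def by (auto intro!: ext)

lemma cons_col1_drop_col1: "in_box (Suc n) k M \<Longrightarrow> cons_col1 (col1 M) (drop_col1 M) = M"
  unfolding in_box_def cons_col1_def drop_col1_def col1_def by (auto intro!: ext)

lemma cons_pivot_col1_drop_col1:
  assumes "in_box (Suc n) k M" and "pivots (Suc n) k M ld" and "pivot_flag k M 1 = 1"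
  shows "cons_pivot_col1 k (drop_col1 M) = M"
  using assms(1) pivot_col1_shape(4,5)[OF assms] unfolding in_box_def cons_pivot_col1_def drop_col1_def
  by (auto intro!: ext)

lemma cons_col1_rrefs:
  assumes M: "M \<in> rrefs n k" and c: "c \<in> col_vectors k"
  shows "cons_col1 c M \<in> rrefs (Suc n) k" and "pivot_flag k (cons_col1 c M) 1 = 0"
proof -
  obtain ld where B: "in_box n k M" and L: "pivots n k M ld" using M unfolding rrefs_iff by blast
  have "in_box (Suc n) k (cons_col1 c M)" unfolding in_box_def
  proof (intro allI impI)
    fix r i assume a: "r \<notin> {1..k} \<or> i \<notin> {1..Suc n}"
    show "cons_col1 c M r i = 0"
    proof (cases "i = 0 \<or> i = 1")
      case True then show ?thesis using a c unfolding cons_col1_def col_vectors_def by auto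
    next
      case False
      then have "r \<notin> {1..k} \<or> i - 1 \<notin> {1..n}" using a by auto
      then show ?thesis using B False unfolding in_box_def cons_col1_def by simp
    qed
  qed
  moreover have L': "pivots (Suc n) k (cons_col1 c M) (\<lambda>r. Suc (ld r))"
    using L unfolding pivots_def cons_col1_def by auto
  ultimately show "cons_col1 c M \<in> rrefs (Suc n) k" unfolding rrefs_iff by blast
  have "\<forall>r\<in>{1..k}. ld r \<ge> 1" using L unfolding pivots_def by auto
  then show "pivot_flag k (cons_col1 c M) 1 = 0" using pivot_flag_eq[OF L', of 1] by (simp add: Suc_le_eq)
qed

lemma cons_pivot_col1_rrefs:
  assumes M: "M \<in> rrefs n (k - 1)" and k: "k \<ge> 1"
  shows "cons_pivot_col1 k M \<in> rrefs (Suc n) k" and "pivot_flag k (cons_pivot_col1 k M) 1 = 1"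
proof -
  obtain ld where B: "in_box n (k - 1) M" and L: "pivots n (k - 1) M ld" using M unfolding rrefs_iff by blast
  have "in_box (Suc n) k (cons_pivot_col1 k M)" unfolding in_box_def
  proof (intro allI impI)
    fix r i assume a: "r \<notin> {1..k} \<or> i \<notin> {1..Suc n}"
    show "cons_pivot_col1 k M r i = 0"
    proof (cases "i = 0 \<or> i = 1")
      case True then show ?thesis using a k unfolding cons_pivot_col1_def by auto
    next
      case False
      then have "r \<notin> {1..k-1} \<or> i - 1 \<notin> {1..n}" using a by auto
      then show ?thesis using B False unfolding in_box_def cons_pivot_col1_def by simp
    qed
  qed
  moreover have L': "pivots (Suc n) k (cons_pivot_col1 k M) (\<lambda>r. if r = k then 1 else Suc (ld r))"
    unfolding pivots_def
  proof (intro conjI ballI allI impI)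
    have "k \<notin> {1..k - 1}" using k by auto
    then have Mk: "M k i = 0" for i using B unfolding in_box_def by blast
    fix r assume r: "r \<in> {1..k}"
    have R: "r \<noteq> k \<Longrightarrow> ld r \<in> {1..n} \<and> M r (ld r) = 1 \<and> (\<forall>i. i > ld r \<longrightarrow> M r i = 0)
        \<and> (\<forall>r'\<in>{1..k-1}. r' \<noteq> r \<longrightarrow> M r' (ld r) = 0)"
      using r pivots_row[OF L, of r] by auto
    show "(if r = k then 1 else Suc (ld r)) \<in> {1..Suc n}" using R by (cases "r = k") auto
    show "cons_pivot_col1 k M r (if r = k then 1 else Suc (ld r)) = 1"
      using R unfolding cons_pivot_col1_def by (cases "r = k") auto
    show "\<And>i. (if r = k then 1 else Suc (ld r)) < i \<Longrightarrow> cons_pivot_col1 k M r i = 0"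
      using R Mk unfolding cons_pivot_col1_def by (cases "r = k") auto
    fix r' assume "r' \<in> {1..k}" "r' \<noteq> r"
    then show "cons_pivot_col1 k M r' (if r = k then 1 else Suc (ld r)) = 0"
      using R Mk unfolding cons_pivot_col1_def by (cases "r = k"; cases "r' = k") auto
  next
    fix r r' assume "r \<in> {1..k}" "r' \<in> {1..k}" "r < r'"
    moreover have "r \<noteq> k \<Longrightarrow> ld r \<ge> 1" using pivots_row[OF L, of r] \<open>r \<in> {1..k}\<close> by auto
    ultimately show "(if r' = k then 1 else Suc (ld r')) < (if r = k then 1 else Suc (ld r))"
      using pivots_decreasing[OF L, of r r'] by auto
  qed
  ultimately show "cons_pivot_col1 k M \<in> rrefs (Suc n) k" unfolding rrefs_iff by blast
  show "pivot_flag k (cons_pivot_col1 k M) 1 = 1" using pivot_flag_eq[OF L', of 1] k by auto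
qed

section \<open>The extended-representation order on matrices\<close>

definition col_value :: "nat \<Rightarrow> ('a::field \<Rightarrow> nat) \<Rightarrow> nat \<Rightarrow> (nat \<Rightarrow> nat \<Rightarrow> 'a) \<Rightarrow> nat \<Rightarrow> nat" where
  "col_value q enc k M i = (\<Sum>t\<in>{1..k}. enc (M t i) * q ^ (k - t))"
definition ext_col_value :: "nat \<Rightarrow> ('a::field \<Rightarrow> nat) \<Rightarrow> nat \<Rightarrow> (nat \<Rightarrow> nat \<Rightarrow> 'a) \<Rightarrow> nat \<Rightarrow> nat" where
  "ext_col_value q enc k M i = pivot_flag k M i * q ^ k + col_value q enc k M i"
definition col_differ :: "nat \<Rightarrow> (nat \<Rightarrow> nat \<Rightarrow> 'a::field) \<Rightarrow> (nat \<Rightarrow> nat \<Rightarrow> 'a) \<Rightarrow> nat \<Rightarrow> bool" where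
  "col_differ k M N i = (pivot_flag k M i \<noteq> pivot_flag k N i \<or> (\<exists>t\<in>{1..k}. M t i \<noteq> N t i))"
definition rref_less :: "nat \<Rightarrow> ('a::field \<Rightarrow> nat) \<Rightarrow> nat \<Rightarrow> nat \<Rightarrow> (nat \<Rightarrow> nat \<Rightarrow> 'a) \<Rightarrow> (nat \<Rightarrow> nat \<Rightarrow> 'a) \<Rightarrow> bool" where
  "rref_less q enc n k M N = (\<exists>i\<in>{1..n}. col_differ k M N i \<and> (\<forall>i'\<in>{1..<i}. \<not> col_differ k M N i') \<and> ext_col_value q enc k M i < ext_col_value q enc k N i)"

lemma pivot_flag_drop_col1:
  assumes B: "in_box (Suc n) k M" and L: "pivots (Suc n) k M ld" and i: "i \<ge> 1"
  shows "pivot_flag k M (Suc i) = pivot_flag (k - pivot_flag k M 1) (drop_col1 M) i"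
proof (cases "pivot_flag k M 1 = 0")
  case True
  note S = drop_col1_nonpivot[OF B L True]
  have "(\<exists>r\<in>{1..k}. ld r = Suc i) \<longleftrightarrow> (\<exists>r\<in>{1..k}. ld r - 1 = i)" using S(3) by force
  then show ?thesis using pivot_flag_eq[OF L, of "Suc i"] pivot_flag_eq[OF S(2), of i] True by simp
next
  case False
  then have T: "pivot_flag k M 1 = 1" by (metis pivot_flag_cases)
  note S = pivot_col1_shape[OF B L T]
  have "(\<exists>r\<in>{1..k}. ld r = Suc i) \<longleftrightarrow> (\<exists>r\<in>{1..k-1}. ld r - 1 = i)"
  proof
    assume "\<exists>r\<in>{1..k}. ld r = Suc i"
    then obtain r where r: "r \<in> {1..k}" "ld r = Suc i" by blast
    then have "r \<noteq> k" using S(2) i by auto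
    then show "\<exists>r\<in>{1..k-1}. ld r - 1 = i" using r by (intro bexI[of _ r]) auto
  next
    assume "\<exists>r\<in>{1..k-1}. ld r - 1 = i"
    then obtain r where r: "r \<in> {1..k-1}" "ld r - 1 = i" by blast
    then have "ld r \<ge> 2" using S(3) by auto
    then show "\<exists>r\<in>{1..k}. ld r = Suc i" using r by (intro bexI[of _ r]) auto
  qed
  then show ?thesis using pivot_flag_eq[OF L, of "Suc i"] pivot_flag_eq[OF drop_col1_pivot(2)[OF B L T], of i] T by simp
qed

lemma col_value_drop_col1:
  assumes B: "in_box (Suc n) k M" and L: "pivots (Suc n) k M ld" and i: "i \<ge> 1" and e0: "enc 0 = 0"
  shows "col_value q enc k M (Suc i) = q ^ (pivot_flag k M 1) * col_value q enc (k - pivot_flag k M 1) (drop_col1 M) i"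
proof (cases "pivot_flag k M 1 = 0")
  case True
  then show ?thesis unfolding col_value_def drop_col1_def using i by simp
next
  case False
  then have T: "pivot_flag k M 1 = 1" by (metis pivot_flag_cases)
  note S = pivot_col1_shape[OF B L T]
  have k: "{1..k} = insert k {1..k-1}" "k \<notin> {1..k-1}" using S(1) by auto
  have "col_value q enc k M (Suc i) = enc (M k (Suc i)) * q ^ (k - k) + (\<Sum>t\<in>{1..k-1}. enc (M t (Suc i)) * q ^ (k - t))"
    unfolding col_value_def by (subst k(1), subst sum.insert) (use k in auto)
  also have "enc (M k (Suc i)) = 0" using S(4) i e0 by simp
  also have "(\<Sum>t\<in>{1..k-1}. enc (M t (Suc i)) * q ^ (k - t)) = (\<Sum>t\<in>{1..k-1}. q * (enc (drop_col1 M t i) * q ^ (k - 1 - t)))"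
  proof (rule sum.cong)
    fix t assume t: "t \<in> {1..k-1}"
    then have "k - t = Suc (k - 1 - t)" by auto
    then show "enc (M t (Suc i)) * q ^ (k - t) = q * (enc (drop_col1 M t i) * q ^ (k - 1 - t))"
      using i unfolding drop_col1_def by simp
  qed simp
  finally show ?thesis using T unfolding col_value_def by (simp add: sum_distrib_left)
qed

lemma ext_col_value_drop_col1:
  assumes B: "in_box (Suc n) k M" and L: "pivots (Suc n) k M ld" and i: "i \<ge> 1" and e0: "enc 0 = 0"
  shows "ext_col_value q enc k M (Suc i) = q ^ (pivot_flag k M 1) * ext_col_value q enc (k - pivot_flag k M 1) (drop_col1 M) i"
proof -
  have kk: "k = pivot_flag k M 1 + (k - pivot_flag k M 1)"
  proof (cases "pivot_flag k M 1 = 0")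
    case False then have "pivot_flag k M 1 = 1" by (metis pivot_flag_cases)
    then show ?thesis using pivot_col1_shape(1)[OF B L] by simp
  qed simp
  have "q ^ k = q ^ (pivot_flag k M 1) * q ^ (k - pivot_flag k M 1)" by (subst kk) (simp add: power_add)
  then show ?thesis unfolding ext_col_value_def using pivot_flag_drop_col1[OF B L i] col_value_drop_col1[where enc=enc and q=q, OF B L i e0]
    by (simp add: algebra_simps)
qed

lemma entries_differ_drop_col1:
  assumes B: "in_box (Suc n) k M" and L: "pivots (Suc n) k M ld"
    and B': "in_box (Suc n) k N" and L': "pivots (Suc n) k N ld'" and v: "pivot_flag k M 1 = pivot_flag k N 1" and i: "i \<ge> 1"
  shows "(\<exists>t\<in>{1..k}. M t (Suc i) \<noteq> N t (Suc i)) \<longleftrightarrow> (\<exists>t\<in>{1..k - pivot_flag k M 1}. drop_col1 M t i \<noteq> drop_col1 N t i)"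
proof (cases "pivot_flag k M 1 = 0")
  case True
  then show ?thesis unfolding drop_col1_def using i by simp
next
  case False
  then have T: "pivot_flag k M 1 = 1" by (metis pivot_flag_cases)
  note S = pivot_col1_shape[OF B L T] and S' = pivot_col1_shape[OF B' L'] 
  have "M k (Suc i) = 0" "N k (Suc i) = 0" using S(4) S'(4) v T i by auto
  have "(\<exists>t\<in>{1..k}. M t (Suc i) \<noteq> N t (Suc i)) \<longleftrightarrow> (\<exists>t\<in>{1..k-1}. M t (Suc i) \<noteq> N t (Suc i))"
  proof -
    have "{1..k} = insert k {1..k-1}" using S(1) by auto
    then show ?thesis using \<open>M k (Suc i) = 0\<close> \<open>N k (Suc i) = 0\<close> by auto
  qed
  then show ?thesis unfolding drop_col1_def using T i by simp
qed

lemma col_differ_drop_col1: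
  assumes B: "in_box (Suc n) k M" and L: "pivots (Suc n) k M ld"
    and B': "in_box (Suc n) k N" and L': "pivots (Suc n) k N ld'" and v: "pivot_flag k M 1 = pivot_flag k N 1" and i: "i \<ge> 1"
  shows "col_differ k M N (Suc i) \<longleftrightarrow> col_differ (k - pivot_flag k M 1) (drop_col1 M) (drop_col1 N) i"
  unfolding col_differ_def using entries_differ_drop_col1[OF assms] pivot_flag_drop_col1[OF B L i] pivot_flag_drop_col1[OF B' L' i] v by simp


section \<open>Counting reduced row echelon matrices\<close>

lemma card_UNIV_field_ge_2: "2 \<le> card (UNIV :: 'a::{finite,field} set)"
proof -
  have "card {0::'a, 1} \<le> card (UNIV :: 'a set)" by (rule card_mono) auto
  then show ?thesis by simp
qed

lemma finite_rrefs: "finite (rrefs n k :: (nat \<Rightarrow> nat \<Rightarrow> 'a::{finite,field}) set)"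
proof -
  let ?A = "{1..k} \<times> {1..n}"
  let ?g = "\<lambda>(f::nat \<times> nat \<Rightarrow> 'a) r i. if r \<in> {1..k} \<and> i \<in> {1..n} then f (r, i) else 0"
  have "rrefs n k \<subseteq> ?g ` (PiE ?A (\<lambda>_. UNIV))"
  proof
    fix M :: "nat \<Rightarrow> nat \<Rightarrow> 'a" assume "M \<in> rrefs n k"
    then have B: "in_box n k M" unfolding rrefs_def is_RREF_iff by auto
    have "M = ?g (restrict (\<lambda>(r, i). M r i) ?A)"
    proof (intro ext)
      fix r i
      show "M r i = ?g (restrict (\<lambda>(r, i). M r i) ?A) r i"
      proof (cases "r \<in> {1..k} \<and> i \<in> {1..n}")
        case True then show ?thesis by simp
      next
        case False
        then have "M r i = 0" using B unfolding in_box_def by blast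
        then show ?thesis using False by simp
      qed
    qed
    moreover have "restrict (\<lambda>(r, i). M r i) ?A \<in> PiE ?A (\<lambda>_. UNIV)" by auto
    ultimately show "M \<in> ?g ` (PiE ?A (\<lambda>_. UNIV))" by (rule image_eqI)
  qed
  moreover have "finite (PiE ?A (\<lambda>_. UNIV :: 'a set))" by (intro finite_PiE) auto
  ultimately show ?thesis by (meson finite_imageI finite_subset)
qed

lemma card_col_vectors: "card (col_vectors k :: (nat \<Rightarrow> 'a::{finite,zero}) set) = card (UNIV :: 'a set) ^ k"
proof -
  have "bij_betw (\<lambda>c. restrict c {1..k}) (col_vectors k) (PiE {1..k} (\<lambda>_. UNIV :: 'a set))"
  proof (rule bij_betw_byWitness[where f' = "\<lambda>f r. if r \<in> {1..k} then f r else 0"])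
    show "\<forall>c\<in>col_vectors k. (\<lambda>r. if r \<in> {1..k} then restrict c {1..k} r else 0) = c"
      unfolding col_vectors_def by (auto simp: fun_eq_iff)
    show "\<forall>f\<in>PiE {1..k} (\<lambda>_. UNIV). restrict (\<lambda>r. if r \<in> {1..k} then f r else 0) {1..k} = f"
      by (auto simp: fun_eq_iff PiE_def extensional_def)
  qed (auto simp: col_vectors_def)
  then have "card (col_vectors k :: (nat \<Rightarrow> 'a) set) = card (PiE {1..k} (\<lambda>_. UNIV :: 'a set))"
    by (rule bij_betw_same_card)
  then show ?thesis by (simp add: card_PiE)
qed

lemma card_rrefs_nonpivot:
  fixes P :: "(nat \<Rightarrow> 'a::field) \<Rightarrow> bool"
  shows "card {M \<in> rrefs (Suc n) k. pivot_flag k M 1 = 0 \<and> P (col1 M)}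
       = card {c \<in> col_vectors k. P c} * card (rrefs n k :: (nat \<Rightarrow> nat \<Rightarrow> 'a) set)"
proof -
  let ?A = "{c \<in> col_vectors k. P c} \<times> (rrefs n k :: (nat \<Rightarrow> nat \<Rightarrow> 'a) set)"
    and ?B = "{M \<in> rrefs (Suc n) k. pivot_flag k M 1 = 0 \<and> P (col1 M)}"
  have "bij_betw (\<lambda>(c, M). cons_col1 c M) ?A ?B"
  proof (rule bij_betw_byWitness[where f' = "\<lambda>M. (col1 M, drop_col1 M)"])
    show "\<forall>x\<in>?A. (\<lambda>M. (col1 M, drop_col1 M)) ((\<lambda>(c, M). cons_col1 c M) x) = x"
      using drop_col1_cons_col1 by (auto simp: rrefs_iff)
    show "\<forall>M\<in>?B. (\<lambda>(c, M). cons_col1 c M) (col1 M, drop_col1 M) = M"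
      using cons_col1_drop_col1 by (auto simp: rrefs_iff)
    show "(\<lambda>(c, M). cons_col1 c M) ` ?A \<subseteq> ?B"
      using cons_col1_rrefs by auto
    show "(\<lambda>M. (col1 M, drop_col1 M)) ` ?B \<subseteq> ?A"
    proof
      fix x assume "x \<in> (\<lambda>M. (col1 M, drop_col1 M)) ` ?B"
      then obtain M where M: "M \<in> ?B" and x: "x = (col1 M, drop_col1 M)" by blast
      then have "col1 M \<in> col_vectors k" using col1_in_col_vectors unfolding rrefs_iff by blast
      moreover have "drop_col1 M \<in> rrefs n k" using drop_col1_rrefs[of M n k] M by simp
      ultimately show "x \<in> ?A" using M x by simp
    qed
  qed
  then have "card ?A = card ?B" by (rule bij_betw_same_card)
  then show ?thesis by (simp add: card_cartesian_product)
qed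

lemma card_rrefs_pivot:
  assumes k: "k \<ge> 1"
  shows "card {M \<in> (rrefs (Suc n) k :: (nat \<Rightarrow> nat \<Rightarrow> 'a::field) set). pivot_flag k M 1 = 1}
       = card (rrefs n (k - 1) :: (nat \<Rightarrow> nat \<Rightarrow> 'a) set)"
proof (rule sym, rule bij_betw_same_card, rule bij_betw_byWitness[where f' = drop_col1])
  show "\<forall>M\<in>rrefs n (k - 1). drop_col1 (cons_pivot_col1 k M) = M"
    using drop_col1_cons_pivot_col1 by (auto simp: rrefs_iff)
  show "\<forall>M\<in>{M \<in> rrefs (Suc n) k. pivot_flag k M 1 = 1}. cons_pivot_col1 k (drop_col1 M) = M"
    using cons_pivot_col1_drop_col1 by (auto simp: rrefs_iff)
  show "cons_pivot_col1 k ` rrefs n (k - 1) \<subseteq> {M \<in> rrefs (Suc n) k. pivot_flag k M 1 = 1}"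
    using cons_pivot_col1_rrefs[OF _ k] by blast
  show "drop_col1 ` {M \<in> rrefs (Suc n) k. pivot_flag k M 1 = 1} \<subseteq> (rrefs n (k - 1) :: (nat \<Rightarrow> nat \<Rightarrow> 'a) set)"
    using drop_col1_rrefs by fastforce
qed

lemma card_rrefs_Suc:
  "card (rrefs (Suc n) k :: (nat \<Rightarrow> nat \<Rightarrow> 'a::{finite,field}) set) =
     card (UNIV :: 'a set) ^ k * card (rrefs n k :: (nat \<Rightarrow> nat \<Rightarrow> 'a) set)
     + (if k \<ge> 1 then card (rrefs n (k-1) :: (nat \<Rightarrow> nat \<Rightarrow> 'a) set) else 0)"
proof -
  let ?Z0 = "{M \<in> (rrefs (Suc n) k :: (nat \<Rightarrow> nat \<Rightarrow> 'a) set). pivot_flag k M 1 = 0 \<and> True}"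
    and ?Z1 = "{M \<in> (rrefs (Suc n) k :: (nat \<Rightarrow> nat \<Rightarrow> 'a) set). pivot_flag k M 1 = 1}"
  have Z: "rrefs (Suc n) k = ?Z0 \<union> ?Z1" using pivot_flag_cases by auto
  have "finite ?Z0" "finite ?Z1" by (rule finite_subset[OF _ finite_rrefs], blast)+
  then have "card (rrefs (Suc n) k :: (nat \<Rightarrow> nat \<Rightarrow> 'a) set) = card ?Z0 + card ?Z1"
    by (subst Z) (rule card_Un_disjoint, auto)
  also have "card ?Z0 = card (col_vectors k :: (nat \<Rightarrow> 'a) set) * card (rrefs n k :: (nat \<Rightarrow> nat \<Rightarrow> 'a) set)"
    using card_rrefs_nonpivot[of n k "\<lambda>_. True"] by simp
  also have "card ?Z1 = (if k \<ge> 1 then card (rrefs n (k-1) :: (nat \<Rightarrow> nat \<Rightarrow> 'a) set) else 0)"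
  proof (cases "k \<ge> 1")
    case True then show ?thesis using card_rrefs_pivot[of k n, where 'a='a] by simp
  next
    case False then show ?thesis unfolding pivot_flag_def by simp
  qed
  finally show ?thesis by (simp add: card_col_vectors)
qed

lemma gauss_of_nat: "gauss q m (int k) = (if k > m then 0 else (\<Prod>i<k. (real q ^ (m - i) - 1) / (real q ^ (k - i) - 1)))"
  by (simp add: gauss_def)

lemma power_minus_one_neq_0: assumes "q \<ge> 2" "j \<ge> 1" shows "real q ^ j - 1 \<noteq> 0"
proof -
  have "q ^ 1 \<le> q ^ j" using assms by (intro power_increasing) auto
  then have "2 \<le> q ^ j" using assms(1) by simp
  then have "(2::real) \<le> real (q ^ j)" by linarith
  then show ?thesis by simp
qed

lemma gauss_diag: assumes q: "q \<ge> 2" shows "gauss q m (int m) = 1"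
proof -
  have "(\<Prod>i<m. (real q ^ (m - i) - 1) / (real q ^ (m - i) - 1)) = (\<Prod>i<m. (1::real))"
  proof (rule prod.cong)
    fix i assume "i \<in> {..<m}"
    then have "m - i \<ge> 1" by auto
    then have "real q ^ (m - i) - 1 \<noteq> 0" using power_minus_one_neq_0[OF q] by blast
    then show "(real q ^ (m - i) - 1) / (real q ^ (m - i) - 1) = 1" by simp
  qed simp
  then show ?thesis unfolding gauss_of_nat by simp
qed

lemma gauss_Suc:
  assumes q: "q \<ge> 2"
  shows "gauss q (Suc n) (int k) = real q ^ k * gauss q n (int k) + (if k \<ge> 1 then gauss q n (int (k - 1)) else 0)"
proof (cases k)
  case 0 then show ?thesis unfolding gauss_of_nat by simp
next
  case (Suc k0)
  consider "k0 > n" | "k0 = n" | "k0 < n" by linarith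
  then show ?thesis
  proof cases
    case 1 then show ?thesis using Suc unfolding gauss_of_nat by simp
  next
    case 2
    have "gauss q n (int (Suc n)) = 0" unfolding gauss_of_nat by simp
    then show ?thesis using Suc 2 gauss_diag[OF q, of n] gauss_diag[OF q, of "Suc n"] by simp
  next
    case 3
    define N where "N m j = (\<Prod>i<j. (real q ^ (m - i) - 1))" for m j
    define D where "D j = (\<Prod>i<j. (real q ^ (j - i) - 1))" for j
    have G: "gauss q m (int j) = N m j / D j" if "j \<le> m" for m j
      using that unfolding gauss_of_nat N_def D_def by (simp add: prod_dividef)
    have ne: "real q ^ j - 1 \<noteq> 0" if "j \<ge> 1" for j using power_minus_one_neq_0[OF q that] .
    have Dnz: "D j \<noteq> 0" for j unfolding D_def using ne by (simp add: prod_zero_iff)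
    have N1: "N (Suc n) (Suc k0) = (real q ^ Suc n - 1) * N n k0"
      unfolding N_def by (subst prod.lessThan_Suc_shift) simp
    have D1: "D (Suc k0) = (real q ^ Suc k0 - 1) * D k0"
      unfolding D_def by (subst prod.lessThan_Suc_shift) simp
    have N2: "N n (Suc k0) = N n k0 * (real q ^ (n - k0) - 1)"
      unfolding N_def by simp
    have key: "real q ^ Suc n - 1 = real q ^ Suc k0 * (real q ^ (n - k0) - 1) + (real q ^ Suc k0 - 1)"
    proof -
      have e: "Suc k0 + (n - k0) = Suc n" using 3 by simp
      have "real q ^ Suc k0 * real q ^ (n - k0) = real q ^ Suc n"
        by (simp only: power_add[symmetric] e)
      then show ?thesis by (simp only: right_diff_distrib mult_1_right)
    qed
    have a: "real q ^ Suc k0 - 1 \<noteq> 0" using ne[of "Suc k0"] by simp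
    have "gauss q (Suc n) (int k) = N (Suc n) (Suc k0) / D (Suc k0)" using G[of "Suc k0" "Suc n"] Suc 3 by simp
    also have "\<dots> = (real q ^ Suc n - 1) * N n k0 / ((real q ^ Suc k0 - 1) * D k0)" unfolding N1 D1 ..
    also have "\<dots> = real q ^ Suc k0 * (N n k0 * (real q ^ (n - k0) - 1) / ((real q ^ Suc k0 - 1) * D k0)) + N n k0 / D k0"
      unfolding key using a Dnz[of k0] by (simp add: field_simps)
    also have "\<dots> = real q ^ k * gauss q n (int k) + gauss q n (int (k - 1))"
      using G[of "Suc k0" n] G[of k0 n] Suc 3 N2 D1 by simp
    finally show ?thesis using Suc by simp
  qed
qed

lemma card_rrefs:
  "real (card (rrefs n k :: (nat \<Rightarrow> nat \<Rightarrow> 'a::{finite,field}) set)) = gauss (card (UNIV :: 'a set)) n (int k)"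
proof (induction n arbitrary: k)
  case 0
  show ?case
  proof (cases k)
    case 0
    have "(rrefs 0 0 :: (nat \<Rightarrow> nat \<Rightarrow> 'a) set) = {\<lambda>_ _. 0}"
    proof (rule set_eqI)
      fix M :: "nat \<Rightarrow> nat \<Rightarrow> 'a"
      show "M \<in> rrefs 0 0 \<longleftrightarrow> M \<in> {\<lambda>_ _. 0}" unfolding rrefs_iff in_box_def pivots_def by (auto intro!: ext)
    qed
    then show ?thesis using 0 unfolding gauss_of_nat by simp
  next
    case (Suc k0)
    have "(rrefs 0 k :: (nat \<Rightarrow> nat \<Rightarrow> 'a) set) = {}"
    proof (rule set_eqI)
      fix M :: "nat \<Rightarrow> nat \<Rightarrow> 'a"
      have "\<not> pivots 0 k M ld" for ld using Suc unfolding pivots_def by auto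
      then show "M \<in> rrefs 0 k \<longleftrightarrow> M \<in> {}" unfolding rrefs_iff by auto
    qed
    then show ?thesis using Suc unfolding gauss_of_nat by simp
  qed
next
  case (Suc n)
  show ?case
    unfolding card_rrefs_Suc[of n k, where 'a='a] gauss_Suc[OF card_UNIV_field_ge_2] using Suc.IH by simp
qed


section \<open>Counting the smaller matrices\<close>

definition base_value :: "nat \<Rightarrow> ('a \<Rightarrow> nat) \<Rightarrow> nat \<Rightarrow> (nat \<Rightarrow> 'a) \<Rightarrow> nat" where
  "base_value q enc k c = (\<Sum>t\<in>{1..k}. enc (c t) * q ^ (k - t))"

lemma base_value_Suc: "base_value q enc (Suc k) c = q * base_value q enc k c + enc (c (Suc k))"
proof -
  have "base_value q enc (Suc k) c = (\<Sum>t\<in>{1..k}. enc (c t) * q ^ (Suc k - t)) + enc (c (Suc k))"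
    unfolding base_value_def by simp
  also have "(\<Sum>t\<in>{1..k}. enc (c t) * q ^ (Suc k - t)) = (\<Sum>t\<in>{1..k}. q * (enc (c t) * q ^ (k - t)))"
    by (rule sum.cong) (auto simp: Suc_diff_le)
  finally show ?thesis unfolding base_value_def by (simp add: sum_distrib_left)
qed

lemma base_value_upd: "base_value q enc k (c(Suc k := x)) = base_value q enc k c"
  unfolding base_value_def by (rule sum.cong) auto

lemma base_value_less: assumes "\<And>x. enc x < q" shows "base_value q enc k c < q ^ k"
proof (induction k)
  case 0 then show ?case by (simp add: base_value_def)
next
  case (Suc k)
  have "base_value q enc (Suc k) c = q * base_value q enc k c + enc (c (Suc k))" by (rule base_value_Suc)
  also have "\<dots> < q * base_value q enc k c + q" using assms by simp
  also have "\<dots> = q * (base_value q enc k c + 1)" by simp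
  also have "\<dots> \<le> q * q ^ k" using Suc by (intro mult_le_mono2) simp
  finally show ?case by simp
qed

lemma base_value_inj: assumes "\<And>x. enc x < q" "inj enc"
  shows "c \<in> col_vectors k \<Longrightarrow> c' \<in> col_vectors k \<Longrightarrow> base_value q enc k c = base_value q enc k c' \<Longrightarrow> c = c'"
proof (induction k arbitrary: c c')
  case 0 then show ?case unfolding col_vectors_def by (auto intro!: ext)
next
  case (Suc k)
  let ?c0 = "c(Suc k := 0)" and ?d0 = "c'(Suc k := 0)"
  have cc: "?c0 \<in> col_vectors k" "?d0 \<in> col_vectors k" using Suc.prems unfolding col_vectors_def by auto
  have e: "q * base_value q enc k ?c0 + enc (c (Suc k)) = q * base_value q enc k ?d0 + enc (c' (Suc k))"
    using Suc.prems(3) unfolding base_value_Suc base_value_upd .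
  have "enc (c (Suc k)) = enc (c' (Suc k))"
    using arg_cong[OF e, of "\<lambda>x. x mod q"] assms(1) by simp
  moreover have "q > 0" using assms(1) by (metis not_less0 neq0_conv)
  ultimately have "base_value q enc k ?c0 = base_value q enc k ?d0" using e by simp
  then have "?c0 = ?d0" using Suc.IH[OF cc] by blast
  moreover have "c (Suc k) = c' (Suc k)" using \<open>enc (c (Suc k)) = enc (c' (Suc k))\<close> assms(2) by (simp add: inj_eq)
  ultimately show ?case by (metis fun_upd_triv fun_upd_upd)
qed

lemma sum_atLeast1_Suc: "(\<Sum>j\<in>{1..Suc m}. f j) = f 1 + (\<Sum>j\<in>{1..m}. f (Suc j))"
proof -
  have "(\<Sum>j\<in>{1..Suc m}. f j) = f 1 + (\<Sum>j\<in>{Suc 1..Suc m}. f j)" by (rule sum.atLeast_Suc_atMost) simp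
  also have "(\<Sum>j\<in>{Suc 1..Suc m}. f j) = (\<Sum>j\<in>{1..m}. f (Suc j))" by (rule sum.shift_bounds_cl_Suc_ivl)
  finally show ?thesis .
qed

definition pivot_count :: "nat \<Rightarrow> (nat \<Rightarrow> nat \<Rightarrow> 'a::field) \<Rightarrow> nat \<Rightarrow> nat" where
  "pivot_count k M j = (\<Sum>l\<in>{1..j}. pivot_flag k M l)"

definition rank_term :: "nat \<Rightarrow> ('a::field \<Rightarrow> nat) \<Rightarrow> nat \<Rightarrow> nat \<Rightarrow> (nat \<Rightarrow> nat \<Rightarrow> 'a) \<Rightarrow> nat \<Rightarrow> real" where
  "rank_term q enc n k M j = (real (pivot_flag k M j) * real q ^ (k - pivot_count k M (j - 1))
        + (1 - real (pivot_flag k M j)) * real (col_value q enc k M j) / real q ^ (pivot_count k M (j - 1)))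
       * gauss q (n - j) (int k - int (pivot_count k M (j - 1)))"

lemma pivot_count_drop_col1:
  assumes B: "in_box (Suc n) k M" and L: "pivots (Suc n) k M ld"
  shows "pivot_count k M (Suc j) = pivot_flag k M 1 + pivot_count (k - pivot_flag k M 1) (drop_col1 M) j"
proof -
  have "pivot_count k M (Suc j) = pivot_flag k M 1 + (\<Sum>l\<in>{1..j}. pivot_flag k M (Suc l))" unfolding pivot_count_def by (rule sum_atLeast1_Suc)
  also have "(\<Sum>l\<in>{1..j}. pivot_flag k M (Suc l)) = pivot_count (k - pivot_flag k M 1) (drop_col1 M) j"
    unfolding pivot_count_def by (rule sum.cong) (use pivot_flag_drop_col1[OF B L] in auto)
  finally show ?thesis .
qed

lemma pivot_flag_le: assumes B: "in_box (Suc n) k M" and L: "pivots (Suc n) k M ld" shows "pivot_flag k M 1 \<le> k"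
proof (cases "pivot_flag k M 1 = 0")
  case False then have "pivot_flag k M 1 = 1" by (metis pivot_flag_cases)
  then show ?thesis using pivot_col1_shape(1)[OF B L] by simp
qed simp

lemma rank_term_drop_col1:
  assumes B: "in_box (Suc n) k M" and L: "pivots (Suc n) k M ld" and e0: "enc 0 = 0" and q: "q > 0" and j: "j \<ge> 1"
  shows "rank_term q enc (Suc n) k M (Suc j) = rank_term q enc n (k - pivot_flag k M 1) (drop_col1 M) j"
proof -
  let ?v = "pivot_flag k M 1" and ?k' = "k - pivot_flag k M 1"
  have w: "pivot_count k M j = ?v + pivot_count ?k' (drop_col1 M) (j - 1)" using pivot_count_drop_col1[OF B L, of "j - 1"] j by simp
  have l: "pivot_flag k M (Suc j) = pivot_flag ?k' (drop_col1 M) j" using pivot_flag_drop_col1[OF B L j] .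
  have c: "col_value q enc k M (Suc j) = q ^ ?v * col_value q enc ?k' (drop_col1 M) j" using col_value_drop_col1[where enc=enc and q=q, OF B L j e0] .
  have vk: "?v \<le> k" by (rule pivot_flag_le[OF B L])
  have e1: "k - pivot_count k M j = ?k' - pivot_count ?k' (drop_col1 M) (j - 1)" unfolding w by simp
  have e2: "int k - int (pivot_count k M j) = int ?k' - int (pivot_count ?k' (drop_col1 M) (j - 1))" unfolding w using vk by simp
  have e3: "x * real (col_value q enc k M (Suc j)) / real q ^ pivot_count k M j = x * real (col_value q enc ?k' (drop_col1 M) j) / real q ^ pivot_count ?k' (drop_col1 M) (j - 1)" for x
    unfolding c w using q by (simp add: power_add)
  show ?thesis unfolding rank_term_def using l e1 e2 e3 by simp
qed

lemma sum_rank_term_Suc: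
  assumes B: "in_box (Suc n) k M" and L: "pivots (Suc n) k M ld" and e0: "enc 0 = 0" and q: "q > 0"
  shows "(\<Sum>j\<in>{1..Suc n}. rank_term q enc (Suc n) k M j) = rank_term q enc (Suc n) k M 1 + (\<Sum>j\<in>{1..n}. rank_term q enc n (k - pivot_flag k M 1) (drop_col1 M) j)"
  unfolding sum_atLeast1_Suc by (rule arg_cong[where f="\<lambda>x. _ + x"], rule sum.cong) (use rank_term_drop_col1[where enc=enc and q=q, OF B L e0 q] in auto)

lemma ext_col_value_eq_if_not_differ: "\<not> col_differ k Y X i \<Longrightarrow> ext_col_value q enc k Y i = ext_col_value q enc k X i"
  unfolding col_differ_def ext_col_value_def col_value_def by (auto intro!: sum.cong)

lemma col_value_1: "col_value q enc k M 1 = base_value q enc k (col1 M)"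
  unfolding col_value_def base_value_def col1_def ..

lemma not_col_differ_1_iff:
  assumes "in_box (Suc n) k X" and "in_box (Suc n) k Y"
  shows "\<not> col_differ k Y X 1 \<longleftrightarrow> pivot_flag k Y 1 = pivot_flag k X 1 \<and> col1 Y = col1 X"
proof -
  have "Y t 1 = X t 1" if "t \<notin> {1..k}" for t using assms that unfolding in_box_def by simp
  then have "(\<forall>t\<in>{1..k}. Y t 1 = X t 1) \<longleftrightarrow> col1 Y = col1 X" unfolding col1_def fun_eq_iff by blast
  then show ?thesis unfolding col_differ_def by blast
qed

lemma cons_col1_same_col1_rrefs:
  assumes X: "X \<in> rrefs (Suc n) k" and Y': "Y' \<in> rrefs n (k - pivot_flag k X 1)"
  shows "cons_col1 (col1 X) Y' \<in> rrefs (Suc n) k" and "\<not> col_differ k (cons_col1 (col1 X) Y') X 1"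
proof -
  let ?Y = "cons_col1 (col1 X) Y'"
  obtain ldX where BX: "in_box (Suc n) k X" and LX: "pivots (Suc n) k X ldX" using X unfolding rrefs_iff by blast
  have Y: "?Y \<in> rrefs (Suc n) k \<and> pivot_flag k ?Y 1 = pivot_flag k X 1"
  proof (cases "pivot_flag k X 1 = 0")
    case True
    then show ?thesis using cons_col1_rrefs[OF _ col1_in_col_vectors[OF BX]] Y' by simp
  next
    case False
    then have v: "pivot_flag k X 1 = 1" by (metis pivot_flag_cases)
    note SX = pivot_col1_shape[OF BX LX v]
    have "?Y = cons_pivot_col1 k Y'"
      using SX(4,5) unfolding cons_col1_def cons_pivot_col1_def col1_def by (auto intro!: ext)
    moreover have "Y' \<in> rrefs n (k - 1)" using Y' v by simp
    note E = cons_pivot_col1_rrefs[OF this SX(1)]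
    ultimately show ?thesis using E v by simp
  qed
  then show "?Y \<in> rrefs (Suc n) k" by blast
  show "\<not> col_differ k ?Y X 1"
    using Y not_col_differ_1_iff[OF BX] unfolding rrefs_iff by auto
qed

lemma card_same_col1:
  assumes X: "X \<in> rrefs (Suc n) k"
  shows "card {Y \<in> rrefs (Suc n) k. \<not> col_differ k Y X 1 \<and> Q (drop_col1 Y)}
       = card {Y' \<in> rrefs n (k - pivot_flag k X 1). Q Y'}"
proof (rule bij_betw_same_card, rule bij_betw_byWitness[where f' = "cons_col1 (col1 X)"])
  let ?L = "{Y \<in> rrefs (Suc n) k. \<not> col_differ k Y X 1 \<and> Q (drop_col1 Y)}"
    and ?R = "{Y' \<in> rrefs n (k - pivot_flag k X 1). Q Y'}"
  have BX: "in_box (Suc n) k X" using X unfolding rrefs_iff by blast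
  show "\<forall>Y\<in>?L. cons_col1 (col1 X) (drop_col1 Y) = Y"
  proof
    fix Y assume Y: "Y \<in> ?L"
    then have BY: "in_box (Suc n) k Y" unfolding rrefs_iff by blast
    have "col1 Y = col1 X" using Y not_col_differ_1_iff[OF BX BY] by blast
    then show "cons_col1 (col1 X) (drop_col1 Y) = Y" using cons_col1_drop_col1[OF BY] by simp
  qed
  show "\<forall>Y'\<in>?R. drop_col1 (cons_col1 (col1 X) Y') = Y'"
    using drop_col1_cons_col1 unfolding rrefs_iff by blast
  show "drop_col1 ` ?L \<subseteq> ?R"
  proof
    fix Y' assume "Y' \<in> drop_col1 ` ?L"
    then obtain Y where Y: "Y \<in> rrefs (Suc n) k" "\<not> col_differ k Y X 1" "Q (drop_col1 Y)" "Y' = drop_col1 Y"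
      by blast
    have "pivot_flag k Y 1 = pivot_flag k X 1" using Y(2) unfolding col_differ_def by blast
    then show "Y' \<in> ?R" using drop_col1_rrefs[OF Y(1)] Y(3,4) by simp
  qed
  show "cons_col1 (col1 X) ` ?R \<subseteq> ?L"
  proof
    fix Y assume "Y \<in> cons_col1 (col1 X) ` ?R"
    then obtain Y' where Y': "Y' \<in> rrefs n (k - pivot_flag k X 1)" "Q Y'" "Y = cons_col1 (col1 X) Y'"
      by blast
    have "drop_col1 Y = Y'" using drop_col1_cons_col1 Y'(1,3) unfolding rrefs_iff by blast
    then show "Y \<in> ?L" using cons_col1_same_col1_rrefs[OF X Y'(1)] Y' by simp
  qed
qed

lemma first_difference_1:
  assumes "D 1"
  shows "(\<exists>i\<in>{1..Suc n}. D i \<and> (\<forall>i'\<in>{1..<i}. \<not> D i') \<and> L i) \<longleftrightarrow> L 1"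
proof
  assume "\<exists>i\<in>{1..Suc n}. D i \<and> (\<forall>i'\<in>{1..<i}. \<not> D i') \<and> L i"
  then obtain i where i: "i \<in> {1..Suc n}" "\<forall>i'\<in>{1..<i}. \<not> D i'" "L i" by blast
  have "i = 1"
  proof (rule ccontr)
    assume "i \<noteq> 1"
    then have "1 \<in> {1..<i}" using i(1) by auto
    then show False using i(2) assms by blast
  qed
  then show "L 1" using i(3) by simp
next
  assume "L 1"
  then show "\<exists>i\<in>{1..Suc n}. D i \<and> (\<forall>i'\<in>{1..<i}. \<not> D i') \<and> L i"
    using assms by (intro bexI[of _ 1]) auto
qed

lemma first_difference_Suc:
  assumes "\<not> D 1"
  shows "(\<exists>i\<in>{1..Suc n}. D i \<and> (\<forall>i'\<in>{1..<i}. \<not> D i') \<and> L i)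
     \<longleftrightarrow> (\<exists>i\<in>{1..n}. D (Suc i) \<and> (\<forall>i'\<in>{1..<i}. \<not> D (Suc i')) \<and> L (Suc i))"
proof
  assume "\<exists>i\<in>{1..Suc n}. D i \<and> (\<forall>i'\<in>{1..<i}. \<not> D i') \<and> L i"
  then obtain i where i: "i \<in> {1..Suc n}" "D i" "\<forall>i'\<in>{1..<i}. \<not> D i'" "L i" by blast
  have "i \<noteq> 1" using i(2) assms by auto
  then obtain j where "i = Suc j" "j \<in> {1..n}" using i(1) by (cases i) auto
  then show "\<exists>i\<in>{1..n}. D (Suc i) \<and> (\<forall>i'\<in>{1..<i}. \<not> D (Suc i')) \<and> L (Suc i)"
    using i by (intro bexI[of _ j]) auto
next
  assume "\<exists>i\<in>{1..n}. D (Suc i) \<and> (\<forall>i'\<in>{1..<i}. \<not> D (Suc i')) \<and> L (Suc i)"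
  then obtain j where j: "j \<in> {1..n}" "D (Suc j)" "\<forall>i'\<in>{1..<j}. \<not> D (Suc i')" "L (Suc j)" by blast
  have "\<not> D i'" if i': "i' \<in> {1..<Suc j}" for i'
  proof (cases "i' = 1")
    case True then show ?thesis using assms by simp
  next
    case False
    then obtain i'' where "i' = Suc i''" "i'' \<in> {1..<j}" using i' False by (cases i') auto
    then show ?thesis using j(3) by blast
  qed
  then show "\<exists>i\<in>{1..Suc n}. D i \<and> (\<forall>i'\<in>{1..<i}. \<not> D i') \<and> L i"
    using j by (intro bexI[of _ "Suc j"]) auto
qed

locale field_encoding =
  fixes enc :: "'a::{finite,field} \<Rightarrow> nat" and q :: nat
  assumes qdef: "q = card (UNIV :: 'a set)" and bij: "bij_betw enc UNIV {0..<q}"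
    and e0: "enc 0 = 0" and e1: "enc 1 = 1"
begin

lemma enc_less: "enc x < q" using bij unfolding bij_betw_def by auto
lemma enc_inj: "inj enc" using bij unfolding bij_betw_def by auto
lemma q_ge_2: "q \<ge> 2"
  using card_UNIV_field_ge_2 qdef by simp

lemma base_value_image: "base_value q enc k ` (col_vectors k :: (nat \<Rightarrow> 'a) set) = {0..<q ^ k}"
proof (rule card_subset_eq)
  show "finite {0..<q ^ k}" by simp
  show "base_value q enc k ` (col_vectors k :: (nat \<Rightarrow> 'a) set) \<subseteq> {0..<q ^ k}" using base_value_less[of enc q, OF enc_less] by auto
  have inj: "inj_on (base_value q enc k) (col_vectors k :: (nat \<Rightarrow> 'a) set)"
    by (rule inj_onI) (rule base_value_inj[of enc q, OF enc_less enc_inj])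
  show "card (base_value q enc k ` (col_vectors k :: (nat \<Rightarrow> 'a) set)) = card {0..<q ^ k}"
    using card_image[OF inj] card_col_vectors[of k, where 'a='a] qdef by simp
qed

lemma card_base_value_less: "card {c \<in> (col_vectors k :: (nat \<Rightarrow> 'a) set). base_value q enc k c < N} = min N (q ^ k)"
proof -
  let ?S = "{c \<in> (col_vectors k :: (nat \<Rightarrow> 'a) set). base_value q enc k c < N}"
  have inj: "inj_on (base_value q enc k) ?S"
    by (rule inj_onI) (rule base_value_inj[of enc q, OF enc_less enc_inj], auto)
  have "base_value q enc k ` ?S = {x \<in> base_value q enc k ` (col_vectors k :: (nat \<Rightarrow> 'a) set). x < N}" by blast
  also have "\<dots> = {0..<min N (q ^ k)}" unfolding base_value_image by auto
  finally show ?thesis using card_image[OF inj] by simp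
qed

lemma col_value_less: "col_value q enc k M i < q ^ k"
  unfolding col_value_def using base_value_less[of enc q k "\<lambda>t. M t i", OF enc_less] unfolding base_value_def .

lemma col_value_pivot_col1:
  assumes "M \<in> rrefs (Suc n) k" and "pivot_flag k M 1 = 1"
  shows "col_value q enc k M 1 = 1"
proof -
  obtain ld where B: "in_box (Suc n) k M" and L: "pivots (Suc n) k M ld" using assms(1) unfolding rrefs_iff by blast
  note S = pivot_col1_shape[OF B L assms(2)]
  have "col_value q enc k M 1 = (\<Sum>t\<in>{1..k}. if t = k then 1 else 0)"
    unfolding col_value_def by (rule sum.cong) (use S(4,5) e0 e1 in auto)
  also have "\<dots> = 1" using S(1) by simp
  finally show ?thesis .
qed

text \<open>A pivot column \<open>X\<^sub>1\<close> is the unit vector \<open>e\<^sub>k\<close>, whose extended value \<open>q\<^sup>k + 1\<close> is maximal.\<close>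

lemma ext_col_value_1_le_pivot:
  assumes X: "X \<in> rrefs (Suc n) k" and Y: "Y \<in> rrefs (Suc n) k" and v: "pivot_flag k Y 1 = 1"
  shows "ext_col_value q enc k X 1 \<le> ext_col_value q enc k Y 1"
proof -
  have "ext_col_value q enc k Y 1 = q ^ k + 1"
    unfolding ext_col_value_def using col_value_pivot_col1[OF Y v] v by simp
  moreover have "ext_col_value q enc k X 1 \<le> q ^ k + 1"
  proof (cases "pivot_flag k X 1 = 0")
    case True then show ?thesis unfolding ext_col_value_def using col_value_less[of k X 1] by simp
  next
    case False then have "pivot_flag k X 1 = 1" by (metis pivot_flag_cases)
    then show ?thesis unfolding ext_col_value_def using col_value_pivot_col1[OF X] by simp
  qed
  ultimately show ?thesis by simp
qed

lemma ext_col_value_1_less_iff: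
  assumes X: "X \<in> rrefs (Suc n) k" and Y: "Y \<in> rrefs (Suc n) k"
  shows "ext_col_value q enc k Y 1 < ext_col_value q enc k X 1 \<longleftrightarrow>
     pivot_flag k Y 1 = 0 \<and> base_value q enc k (col1 Y) < ext_col_value q enc k X 1"
proof (cases "pivot_flag k Y 1 = 0")
  case True then show ?thesis unfolding ext_col_value_def col_value_1 by simp
next
  case False then have "pivot_flag k Y 1 = 1" by (metis pivot_flag_cases)
  then show ?thesis using ext_col_value_1_le_pivot[OF X Y] by (simp add: not_less)
qed

lemma compare_drop_col1:
  assumes X: "X \<in> rrefs (Suc n) k" and Y: "Y \<in> rrefs (Suc n) k"
    and nd: "\<not> col_differ k Y X 1" and i: "i \<ge> 1"
  shows "col_differ k Y X (Suc i) \<longleftrightarrow> col_differ (k - pivot_flag k X 1) (drop_col1 Y) (drop_col1 X) i"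
    and "ext_col_value q enc k Y (Suc i) < ext_col_value q enc k X (Suc i) \<longleftrightarrow>
      ext_col_value q enc (k - pivot_flag k X 1) (drop_col1 Y) i
        < ext_col_value q enc (k - pivot_flag k X 1) (drop_col1 X) i"
proof -
  obtain ldX where BX: "in_box (Suc n) k X" and LX: "pivots (Suc n) k X ldX" using X unfolding rrefs_iff by blast
  obtain ld where BY: "in_box (Suc n) k Y" and LY: "pivots (Suc n) k Y ld" using Y unfolding rrefs_iff by blast
  have v: "pivot_flag k Y 1 = pivot_flag k X 1" using nd unfolding col_differ_def by blast
  show "col_differ k Y X (Suc i) \<longleftrightarrow> col_differ (k - pivot_flag k X 1) (drop_col1 Y) (drop_col1 X) i"
    using col_differ_drop_col1[OF BY LY BX LX v i] v by simp
  show "ext_col_value q enc k Y (Suc i) < ext_col_value q enc k X (Suc i) \<longleftrightarrow>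
      ext_col_value q enc (k - pivot_flag k X 1) (drop_col1 Y) i
        < ext_col_value q enc (k - pivot_flag k X 1) (drop_col1 X) i"
    using ext_col_value_drop_col1[where enc=enc and q=q, OF BY LY i e0]
      ext_col_value_drop_col1[where enc=enc and q=q, OF BX LX i e0] v q_ge_2 by simp
qed

lemma rref_less_Suc_iff:
  assumes X: "X \<in> rrefs (Suc n) k" and Y: "Y \<in> rrefs (Suc n) k"
  shows "rref_less q enc (Suc n) k Y X \<longleftrightarrow>
     (pivot_flag k Y 1 = 0 \<and> base_value q enc k (col1 Y) < ext_col_value q enc k X 1) \<or>
     (\<not> col_differ k Y X 1 \<and> rref_less q enc n (k - pivot_flag k X 1) (drop_col1 Y) (drop_col1 X))"
proof (cases "col_differ k Y X 1")
  case True
  have "rref_less q enc (Suc n) k Y X \<longleftrightarrow> ext_col_value q enc k Y 1 < ext_col_value q enc k X 1"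
    unfolding rref_less_def by (rule first_difference_1[where D = "col_differ k Y X", OF True])
  then show ?thesis using True ext_col_value_1_less_iff[OF X Y] by simp
next
  case False
  have "rref_less q enc (Suc n) k Y X \<longleftrightarrow>
      (\<exists>i\<in>{1..n}. col_differ k Y X (Suc i) \<and> (\<forall>i'\<in>{1..<i}. \<not> col_differ k Y X (Suc i'))
         \<and> ext_col_value q enc k Y (Suc i) < ext_col_value q enc k X (Suc i))"
    unfolding rref_less_def by (rule first_difference_Suc[where D = "col_differ k Y X", OF False])
  also have "\<dots> \<longleftrightarrow> rref_less q enc n (k - pivot_flag k X 1) (drop_col1 Y) (drop_col1 X)"
    unfolding rref_less_def by (simp add: compare_drop_col1[OF X Y False])
  finally have "rref_less q enc (Suc n) k Y X \<longleftrightarrow>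
    rref_less q enc n (k - pivot_flag k X 1) (drop_col1 Y) (drop_col1 X)" .
  moreover have "\<not> (pivot_flag k Y 1 = 0 \<and> base_value q enc k (col1 Y) < ext_col_value q enc k X 1)"
    using ext_col_value_1_less_iff[OF X Y] ext_col_value_eq_if_not_differ[OF False, where q=q and enc=enc]
    by simp
  ultimately show ?thesis using False by blast
qed

lemma card_rref_less_Suc:
  assumes X: "X \<in> rrefs (Suc n) k"
  shows "card {Y \<in> rrefs (Suc n) k. rref_less q enc (Suc n) k Y X} =
     min (ext_col_value q enc k X 1) (q ^ k) * card (rrefs n k :: (nat \<Rightarrow> nat \<Rightarrow> 'a) set)
     + card {Y' \<in> rrefs n (k - pivot_flag k X 1). rref_less q enc n (k - pivot_flag k X 1) Y' (drop_col1 X)}"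
proof -
  let ?e = "ext_col_value q enc k X 1" and ?k' = "k - pivot_flag k X 1"
  define A where "A = {Y \<in> (rrefs (Suc n) k :: (nat \<Rightarrow> nat \<Rightarrow> 'a) set).
    pivot_flag k Y 1 = 0 \<and> base_value q enc k (col1 Y) < ?e}"
  define B where "B = {Y \<in> (rrefs (Suc n) k :: (nat \<Rightarrow> nat \<Rightarrow> 'a) set).
    \<not> col_differ k Y X 1 \<and> rref_less q enc n ?k' (drop_col1 Y) (drop_col1 X)}"
  have "{Y \<in> rrefs (Suc n) k. rref_less q enc (Suc n) k Y X} = A \<union> B"
    unfolding A_def B_def using rref_less_Suc_iff[OF X] by blast
  moreover have "A \<inter> B = {}"
  proof -
    have "\<not> (pivot_flag k Y 1 = 0 \<and> base_value q enc k (col1 Y) < ?e)"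
      if "Y \<in> rrefs (Suc n) k" "\<not> col_differ k Y X 1" for Y
      using ext_col_value_1_less_iff[OF X that(1)]
        ext_col_value_eq_if_not_differ[OF that(2), where q=q and enc=enc] by simp
    then show ?thesis unfolding A_def B_def by blast
  qed
  moreover have "finite A" "finite B"
    unfolding A_def B_def by (rule finite_subset[OF _ finite_rrefs], blast)+
  ultimately have "card {Y \<in> rrefs (Suc n) k. rref_less q enc (Suc n) k Y X} = card A + card B"
    by (simp add: card_Un_disjoint)
  also have "card A = min ?e (q ^ k) * card (rrefs n k :: (nat \<Rightarrow> nat \<Rightarrow> 'a) set)"
    unfolding A_def using card_rrefs_nonpivot[of n k "\<lambda>c. base_value q enc k c < ?e"] card_base_value_less
    by simp
  also have "card B = card {Y' \<in> rrefs n ?k'. rref_less q enc n ?k' Y' (drop_col1 X)}"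
    unfolding B_def by (rule card_same_col1[OF X])
  finally show ?thesis .
qed

lemma rank_term_1:
  assumes "X \<in> rrefs (Suc n) k"
  shows "rank_term q enc (Suc n) k X 1 = real (min (ext_col_value q enc k X 1) (q ^ k)) * gauss q n (int k)"
proof -
  have "real (pivot_flag k X 1) * real q ^ k + (1 - real (pivot_flag k X 1)) * real (col_value q enc k X 1)
      = real (min (ext_col_value q enc k X 1) (q ^ k))"
  proof (cases "pivot_flag k X 1 = 0")
    case True then show ?thesis unfolding ext_col_value_def using col_value_less[of k X 1] by simp
  next
    case False then have "pivot_flag k X 1 = 1" by (metis pivot_flag_cases)
    then show ?thesis unfolding ext_col_value_def by simp
  qed
  then show ?thesis unfolding rank_term_def pivot_count_def by simp
qed

lemma card_rref_less:
  "X \<in> rrefs n k \<Longrightarrow> real (card {Y \<in> rrefs n k. rref_less q enc n k Y X}) = (\<Sum>j\<in>{1..n}. rank_term q enc n k X j)"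
proof (induction n arbitrary: k X)
  case 0
  then show ?case unfolding rref_less_def by simp
next
  case (Suc n)
  obtain ld where B: "in_box (Suc n) k X" and L: "pivots (Suc n) k X ld" using Suc.prems unfolding rrefs_iff by blast
  let ?k' = "k - pivot_flag k X 1"
  have "real (card {Y \<in> rrefs (Suc n) k. rref_less q enc (Suc n) k Y X}) =
      real (min (ext_col_value q enc k X 1) (q ^ k)) * gauss q n (int k)
      + real (card {Y' \<in> rrefs n ?k'. rref_less q enc n ?k' Y' (drop_col1 X)})"
    using card_rref_less_Suc[OF Suc.prems] card_rrefs[of n k, where 'a='a] qdef by simp
  also have "\<dots> = rank_term q enc (Suc n) k X 1 + (\<Sum>j\<in>{1..n}. rank_term q enc n ?k' (drop_col1 X) j)"
    using rank_term_1[OF Suc.prems] Suc.IH[OF drop_col1_rrefs[OF Suc.prems]] by simp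
  also have "\<dots> = (\<Sum>j\<in>{1..Suc n}. rank_term q enc (Suc n) k X j)"
    using sum_rank_term_Suc[where enc=enc and q=q, OF B L e0] q_ge_2 by simp
  finally show ?case .
qed

end


section \<open>Subspaces and their reduced row echelon form\<close>

lemma rowspan_add: "x \<in> rowspan k B \<Longrightarrow> y \<in> rowspan k B \<Longrightarrow> (\<lambda>i. x i + y i) \<in> rowspan k B"
proof -
  assume "x \<in> rowspan k B" "y \<in> rowspan k B"
  then obtain c d where x: "x = (\<lambda>i. \<Sum>r\<in>{1..k}. c r * B r i)" and y: "y = (\<lambda>i. \<Sum>r\<in>{1..k}. d r * B r i)"
    unfolding rowspan_def by blast
  have h: "(\<lambda>i. x i + y i) = (\<lambda>i. \<Sum>r\<in>{1..k}. (c r + d r) * B r i)"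
    unfolding x y by (simp add: sum.distrib distrib_right)
  show ?thesis unfolding rowspan_def by (rule CollectI, rule exI[where x="\<lambda>r. c r + d r"], simp add: h)
qed

lemma rowspan_scale: "x \<in> rowspan k B \<Longrightarrow> (\<lambda>i. a * x i) \<in> rowspan k B"
proof -
  assume "x \<in> rowspan k B"
  then obtain c where x: "x = (\<lambda>i. \<Sum>r\<in>{1..k}. c r * B r i)" unfolding rowspan_def by blast
  have h: "(\<lambda>i. a * x i) = (\<lambda>i. \<Sum>r\<in>{1..k}. (a * c r) * B r i)"
    unfolding x by (simp add: sum_distrib_left mult.assoc)
  show ?thesis unfolding rowspan_def by (rule CollectI, rule exI[where x="\<lambda>r. a * c r"], simp add: h)
qed

lemma rowspan_zero: "(\<lambda>i. 0) \<in> rowspan k B"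
  unfolding rowspan_def by (rule CollectI, rule exI[where x="\<lambda>r. 0"], simp)

lemma rowspan_diff: "x \<in> rowspan k B \<Longrightarrow> y \<in> rowspan k B \<Longrightarrow> (\<lambda>i. x i - y i) \<in> rowspan k B"
proof -
  assume a: "x \<in> rowspan k B" "y \<in> rowspan k B"
  have "(\<lambda>i. x i + (- 1) * y i) \<in> rowspan k B" by (rule rowspan_add[OF a(1) rowspan_scale[OF a(2)]])
  then show ?thesis by simp
qed

lemma rowspan_sum: "finite S \<Longrightarrow> (\<forall>p\<in>S. y p \<in> rowspan k B) \<Longrightarrow> (\<lambda>i. \<Sum>p\<in>S. a p * y p i) \<in> rowspan k B"
proof (induction S rule: finite_induct)
  case empty then show ?case using rowspan_zero by simp
next
  case (insert p S)
  have "(\<lambda>i. a p * y p i + (\<Sum>p\<in>S. a p * y p i)) \<in> rowspan k B"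
    using rowspan_add[OF rowspan_scale[of "y p"] insert.IH] insert.prems by simp
  then show ?case using insert.hyps by simp
qed

lemma row_in_rowspan: "r \<in> {1..k} \<Longrightarrow> B r \<in> rowspan k B"
proof -
  assume r: "r \<in> {1..k}"
  have h: "B r = (\<lambda>i. \<Sum>s\<in>{1..k}. (if s = r then 1 else 0) * B s i)"
  proof (rule ext)
    fix i
    have "(\<Sum>s\<in>{1..k}. (if s = r then 1 else 0) * B s i) = (\<Sum>s\<in>{1..k}. if s = r then B s i else 0)"
      by (rule sum.cong) auto
    also have "\<dots> = B r i" using r by simp
    finally show "B r i = (\<Sum>s\<in>{1..k}. (if s = r then 1 else 0) * B s i)" by simp
  qed
  show ?thesis unfolding rowspan_def by (rule CollectI, rule exI[where x="\<lambda>s. if s = r then 1 else 0"], rule h)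
qed

lemma Fn_nonzero:
  assumes "x \<in> Fn n" and "x i \<noteq> 0"
  shows "i \<in> {1..n}"
proof (rule ccontr)
  assume "i \<notin> {1..n}"
  then have "i < 1 \<or> i > n" by auto
  then show False using assms unfolding Fn_def by blast
qed

lemma rowspan_subset_Fn: "(\<forall>r\<in>{1..k}. B r \<in> Fn n) \<Longrightarrow> x \<in> rowspan k B \<Longrightarrow> x \<in> Fn n"
  unfolding rowspan_def Fn_def by auto

lemma pivots_coeff:
  assumes L: "pivots n k M ld" and s: "s \<in> {1..k}"
  shows "(\<Sum>r\<in>{1..k}. c r * M r (ld s)) = c s"
proof -
  have "(\<Sum>r\<in>{1..k}. c r * M r (ld s)) = (\<Sum>r\<in>{1..k}. if r = s then c r else 0)"
  proof (rule sum.cong)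
    fix r assume r: "r \<in> {1..k}"
    show "c r * M r (ld s) = (if r = s then c r else 0)" using pivots_row[OF L s] r by auto
  qed simp
  also have "\<dots> = c s" using s by simp
  finally show ?thesis .
qed

lemma rowspan_zero_on_pivots:
  assumes L: "pivots n k M ld" and x: "x \<in> rowspan k M" and z: "\<forall>s\<in>{1..k}. x (ld s) = 0"
  shows "x = (\<lambda>i. 0)"
proof -
  obtain c where c: "x = (\<lambda>i. \<Sum>r\<in>{1..k}. c r * M r i)" using x unfolding rowspan_def by blast
  have "c s = 0" if "s \<in> {1..k}" for s using z that pivots_coeff[OF L that, of c] c by simp
  then show ?thesis unfolding c by auto
qed

lemma leading_position_is_pivot:
  assumes L: "pivots n k M ld" and x: "x \<in> rowspan k M" and p: "x p \<noteq> 0" and ab: "\<forall>i. i > p \<longrightarrow> x i = 0"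
  shows "p \<in> ld ` {1..k}"
proof -
  obtain c where c: "x = (\<lambda>i. \<Sum>r\<in>{1..k}. c r * M r i)" using x unfolding rowspan_def by blast
  have ne: "{r \<in> {1..k}. c r \<noteq> 0} \<noteq> {}"
  proof
    assume "{r \<in> {1..k}. c r \<noteq> 0} = {}"
    then have "x p = 0" unfolding c by auto
    then show False using p by simp
  qed
  define r0 where "r0 = Min {r \<in> {1..k}. c r \<noteq> 0}"
  have r0: "r0 \<in> {1..k}" "c r0 \<noteq> 0" using Min_in[OF _ ne] unfolding r0_def by auto
  have r0min: "r \<in> {1..k} \<Longrightarrow> r < r0 \<Longrightarrow> c r = 0" for r using Min_le[of "{r \<in> {1..k}. c r \<noteq> 0}" r] unfolding r0_def
    by fastforce
  have v: "x (ld r0) = c r0" unfolding c using pivots_coeff[OF L r0(1)] .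
  have above: "x i = 0" if i: "i > ld r0" for i
  proof -
    have "c r * M r i = 0" if r: "r \<in> {1..k}" for r
    proof (cases "r < r0")
      case True then show ?thesis using r0min r by simp
    next
      case False
      then have "ld r \<le> ld r0" using pivots_decreasing[OF L, of r0 r] r r0(1) by (cases "r = r0") auto
      then show ?thesis using pivots_row[OF L r] i by auto
    qed
    then show ?thesis unfolding c by (auto intro!: sum.neutral)
  qed
  have "p = ld r0"
  proof (rule ccontr)
    assume "p \<noteq> ld r0"
    then consider "p < ld r0" | "p > ld r0" by linarith
    then show False
    proof cases
      case 1 then show False using ab v r0(2) by auto
    next
      case 2 then show False using above p by auto
    qed
  qed
  then show ?thesis using r0(1) by blast
qed

lemma decreasing_eq_if_image_eq:
  fixes f g :: "nat \<Rightarrow> nat"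
  assumes f: "\<forall>r\<in>{1..k}. \<forall>r'\<in>{1..k}. r < r' \<longrightarrow> f r' < f r"
    and g: "\<forall>r\<in>{1..k}. \<forall>r'\<in>{1..k}. r < r' \<longrightarrow> g r' < g r"
    and im: "f ` {1..k} = g ` {1..k}"
  shows "r \<in> {1..k} \<Longrightarrow> f r = g r"
proof (induction r rule: less_induct)
  case (less r)
  obtain s where s: "s \<in> {1..k}" "g r = f s" using im less.prems by (metis imageE image_eqI)
  have "\<not> s < r"
  proof
    assume "s < r"
    then have "f s = g s" using less.IH s(1) by blast
    moreover have "g r < g s" using g \<open>s < r\<close> s(1) less.prems by blast
    ultimately show False using s by simp
  qed
  moreover have "\<not> s > r"
  proof
    assume sr: "s > r"
    then have gr: "g r < f r" using f s less.prems by auto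
    obtain t where t: "t \<in> {1..k}" "f r = g t" using im less.prems by (metis imageE image_eqI)
    consider "t < r" | "t = r" | "t > r" by linarith
    then show False
    proof cases
      case 1 then have "f t = g t" using less.IH t(1) by blast
      moreover have "f r < f t" using f 1 t(1) less.prems by blast
      ultimately show False using t by simp
    next
      case 2 then show False using gr t by simp
    next
      case 3 then have "g t < g r" using g t less.prems by auto
      then show False using gr t by simp
    qed
  qed
  ultimately show ?case using s by simp
qed

lemma rref_unique:
  assumes M: "is_RREF n k M" and M': "is_RREF n k M'" and e: "rowspan k M = rowspan k M'"
  shows "M = M'"
proof -
  obtain ld where B: "in_box n k M" and L: "pivots n k M ld" using M unfolding is_RREF_iff by blast
  obtain ld' where B': "in_box n k M'" and L': "pivots n k M' ld'" using M' unfolding is_RREF_iff by blast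
  have sub: "ld ` {1..k} \<subseteq> ld' ` {1..k}" if L: "pivots n k M ld" and L': "pivots n k M' ld'" and e: "rowspan k M = rowspan k M'"
    for M M' :: "nat \<Rightarrow> nat \<Rightarrow> 'a" and ld ld'
  proof
    fix p assume "p \<in> ld ` {1..k}"
    then obtain s where s: "s \<in> {1..k}" "p = ld s" by blast
    have "M s \<in> rowspan k M'" using row_in_rowspan[of s k M] s(1) e by simp
    then show "p \<in> ld' ` {1..k}" using leading_position_is_pivot[OF L', of "M s" p] pivots_row[OF L s(1)] s by simp
  qed
  have im: "ld ` {1..k} = ld' ` {1..k}" using sub[OF L L' e] sub[OF L' L e[symmetric]] by blast
  have ldeq: "r \<in> {1..k} \<Longrightarrow> ld r = ld' r" for r
    by (rule decreasing_eq_if_image_eq[OF _ _ im]) (use L L' in \<open>auto simp: pivots_def\<close>)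
  show ?thesis
  proof (intro ext)
    fix r i
    show "M r i = M' r i"
    proof (cases "r \<in> {1..k}")
      case False then show ?thesis using B B' unfolding in_box_def by simp
    next
      case True
      let ?d = "\<lambda>i. M' r i - M r i"
      have "M' r \<in> rowspan k M" using row_in_rowspan[of r k M'] True e by simp
      then have d: "?d \<in> rowspan k M" by (rule rowspan_diff[OF _ row_in_rowspan[of r k M, OF True]])
      have "?d (ld s) = 0" if s: "s \<in> {1..k}" for s
      proof -
        have "M' r (ld s) = (if r = s then 1 else 0)" using pivots_row[OF L' s] ldeq[OF s] True by auto
        moreover have "M r (ld s) = (if r = s then 1 else 0)" using pivots_row[OF L s] True by auto
        ultimately show ?thesis by simp
      qed
      then have "?d = (\<lambda>i. 0)" using rowspan_zero_on_pivots[OF L d] by blast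
      then show ?thesis using fun_cong[of ?d "\<lambda>i. 0" i] by simp
    qed
  qed
qed

lemma pivots_lin_indep: assumes L: "pivots n k M ld" shows "lin_indep k M"
  unfolding lin_indep_def
proof (intro allI impI ballI)
  fix c r assume z: "(\<lambda>i. \<Sum>r\<in>{1..k}. c r * M r i) = (\<lambda>i. 0)" and r: "r \<in> {1..k}"
  have "(\<Sum>s\<in>{1..k}. c s * M s (ld r)) = 0" using fun_cong[OF z, of "ld r"] by simp
  then show "c r = 0" using pivots_coeff[OF L r] by simp
qed

lemma rowspan_rref_in_Gq: assumes "is_RREF n k M" shows "rowspan k M \<in> Gq n k"
proof -
  obtain ld where B: "in_box n k M" and L: "pivots n k M ld" using assms unfolding is_RREF_iff by blast
  have "\<forall>r\<in>{1..k}. M r \<in> Fn n" using B unfolding in_box_def Fn_def by auto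
  then show ?thesis unfolding Gq_def using pivots_lin_indep[OF L] by blast
qed


lemma card_rowspan:
  assumes I: "lin_indep k (B :: nat \<Rightarrow> nat \<Rightarrow> 'a::{finite,field})"
  shows "card (rowspan k B) = card (UNIV :: 'a set) ^ k"
proof -
  let ?f = "\<lambda>c::nat \<Rightarrow> 'a. (\<lambda>i. \<Sum>r\<in>{1..k}. c r * B r i)"
  have e: "rowspan k B = ?f ` (PiE {1..k} (\<lambda>_. UNIV))"
  proof
    show "rowspan k B \<subseteq> ?f ` (PiE {1..k} (\<lambda>_. UNIV))"
    proof
      fix x assume "x \<in> rowspan k B"
      then obtain c where c: "x = ?f c" unfolding rowspan_def by blast
      have "?f c = ?f (restrict c {1..k})" by (intro ext sum.cong) auto
      moreover have "restrict c {1..k} \<in> PiE {1..k} (\<lambda>_. UNIV)" by simp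
      ultimately show "x \<in> ?f ` (PiE {1..k} (\<lambda>_. UNIV))" unfolding c by (rule image_eqI)
    qed
    show "?f ` (PiE {1..k} (\<lambda>_. UNIV)) \<subseteq> rowspan k B" unfolding rowspan_def by blast
  qed
  have inj: "inj_on ?f (PiE {1..k} (\<lambda>_. UNIV))"
  proof (rule inj_onI)
    fix c d assume c: "c \<in> PiE {1..k} (\<lambda>_. UNIV :: 'a set)" and d: "d \<in> PiE {1..k} (\<lambda>_. UNIV :: 'a set)" and e: "?f c = ?f d"
    have h: "(\<lambda>i. \<Sum>r\<in>{1..k}. (c r - d r) * B r i) = (\<lambda>i. 0)"
    proof
      fix i
      have "(\<Sum>r\<in>{1..k}. (c r - d r) * B r i) = (\<Sum>r\<in>{1..k}. c r * B r i) - (\<Sum>r\<in>{1..k}. d r * B r i)"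
        by (simp add: left_diff_distrib sum_subtractf)
      also have "\<dots> = 0" using fun_cong[OF e, of i] by simp
      finally show "(\<Sum>r\<in>{1..k}. (c r - d r) * B r i) = 0" .
    qed
    have "\<forall>r\<in>{1..k}. c r - d r = 0" using spec[OF I[unfolded lin_indep_def], of "\<lambda>r. c r - d r"] h by simp
    then show "c = d" by (intro PiE_ext[OF c d]) auto
  qed
  have "card (rowspan k B) = card (PiE {1..k} (\<lambda>_. UNIV :: 'a set))" by (subst e, rule card_image[OF inj])
  also have "\<dots> = (\<Prod>i\<in>{1..k}. card (UNIV :: 'a set))" by (rule card_PiE) simp
  finally show ?thesis by simp
qed

definition lead_positions :: "(nat \<Rightarrow> 'a::field) set \<Rightarrow> nat set" where
  "lead_positions X = {p. \<exists>x\<in>X. x p = 1 \<and> (\<forall>i>p. x i = 0)}"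

lemma lead_positions_subset: "X \<subseteq> Fn n \<Longrightarrow> lead_positions X \<subseteq> {1..n}"
  using Fn_nonzero unfolding lead_positions_def by fastforce

lemma exists_reduced_vector:
  assumes fin: "finite (lead_positions (rowspan k B))" and p: "p \<in> lead_positions (rowspan k B)"
  shows "\<exists>x\<in>rowspan k B. x p = 1 \<and> (\<forall>i>p. x i = 0)
           \<and> (\<forall>p'\<in>lead_positions (rowspan k B). p' \<noteq> p \<longrightarrow> x p' = 0)"
  using p
proof (induction p rule: less_induct)
  case (less p)
  let ?X = "rowspan k B" and ?P = "lead_positions (rowspan k B)"
  define good where "good p x \<longleftrightarrow> x \<in> ?X \<and> x p = 1 \<and> (\<forall>i>p. x i = 0) \<and> (\<forall>p'\<in>?P. p' \<noteq> p \<longrightarrow> x p' = 0)"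
    for p x
  obtain x0 where x0: "x0 \<in> ?X" "x0 p = 1" "\<forall>i>p. x0 i = 0"
    using less.prems unfolding lead_positions_def by blast
  define S where "S = {p' \<in> ?P. p' < p}"
  have finS: "finite S" unfolding S_def using fin by simp
  define g where "g p' = (SOME x. good p' x)" for p'
  have gg: "good p' (g p')" if "p' \<in> S" for p'
  proof -
    have "\<exists>x. good p' x" using less.IH that unfolding S_def good_def by blast
    then show ?thesis unfolding g_def by (rule someI_ex)
  qed
  \<comment> \<open>clear the lower leading positions of \<open>x0\<close> using the reduced vectors obtained for them\<close>
  define y where "y = (\<lambda>i. x0 i - (\<Sum>p'\<in>S. x0 p' * g p' i))"
  have gX: "\<forall>p'\<in>S. g p' \<in> ?X" using gg unfolding good_def by blast
  have s0: "(\<Sum>p'\<in>S. x0 p' * g p' i) = 0" if "i \<ge> p" for i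
  proof (rule sum.neutral, rule ballI)
    fix p' assume p': "p' \<in> S"
    then have "i > p'" using that unfolding S_def by auto
    then show "x0 p' * g p' i = 0" using gg[OF p'] unfolding good_def by simp
  qed
  have "y \<in> ?X" unfolding y_def by (rule rowspan_diff[OF x0(1) rowspan_sum[OF finS gX]])
  moreover have "y p = 1" unfolding y_def using x0(2) s0[of p] by simp
  moreover have above: "\<forall>i>p. y i = 0" unfolding y_def using x0(3) s0 by simp
  moreover have "y p'' = 0" if "p'' \<in> ?P" "p'' \<noteq> p" for p''
  proof (cases "p'' > p")
    case True then show ?thesis using above by simp
  next
    case False
    then have p''S: "p'' \<in> S" unfolding S_def using that by auto
    have "(\<Sum>p'\<in>S. x0 p' * g p' p'') = (\<Sum>p'\<in>S. if p' = p'' then x0 p' else 0)"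
    proof (rule sum.cong)
      fix p' assume "p' \<in> S"
      then show "x0 p' * g p' p'' = (if p' = p'' then x0 p' else 0)"
        using gg[of p'] that(1) unfolding good_def by auto
    qed simp
    also have "\<dots> = x0 p''" using p''S finS by simp
    finally show ?thesis unfolding y_def by simp
  qed
  ultimately show ?case by blast
qed

lemma rowspan_eq_0_if_zero_on_lead_positions:
  assumes XF: "rowspan k B \<subseteq> Fn n" and y: "y \<in> rowspan k B"
    and z: "\<forall>p\<in>lead_positions (rowspan k B). y p = 0"
  shows "y = (\<lambda>i. 0)"
proof (rule ccontr)
  assume "y \<noteq> (\<lambda>i. 0)"
  define Z where "Z = {i. y i \<noteq> 0}"
  have "Z \<subseteq> {1..n}" using Fn_nonzero XF y unfolding Z_def by blast
  then have fZ: "finite Z" using finite_subset by blast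
  have "Z \<noteq> {}" using \<open>y \<noteq> (\<lambda>i. 0)\<close> unfolding Z_def by auto
  define p where "p = Max Z"
  have yp: "y p \<noteq> 0" using Max_in[OF fZ \<open>Z \<noteq> {}\<close>] unfolding p_def Z_def by simp
  have above: "\<forall>i>p. y i = 0" using Max_ge[OF fZ] unfolding p_def Z_def by force
  \<comment> \<open>normalising the top nonzero entry of \<open>y\<close> exhibits \<open>p\<close> as a leading position\<close>
  have "(\<lambda>i. inverse (y p) * y i) \<in> rowspan k B" by (rule rowspan_scale[OF y])
  then have "p \<in> lead_positions (rowspan k B)"
    unfolding lead_positions_def using yp above by (intro CollectI bexI) auto
  then show False using z yp by blast
qed

lemma exists_decreasing_enumeration:
  assumes "finite P"
  obtains ld :: "nat \<Rightarrow> nat" where "ld ` {1..card P} = P"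
    and "\<forall>r\<in>{1..card P}. \<forall>r'\<in>{1..card P}. r < r' \<longrightarrow> ld r' < ld r"
proof
  let ?m = "card P" and ?L = "sorted_list_of_set P"
  have set: "set ?L = P" and len: "length ?L = ?m" and sorted: "sorted_wrt (<) ?L"
    using assms by auto
  show "\<forall>r\<in>{1..?m}. \<forall>r'\<in>{1..?m}. r < r' \<longrightarrow> ?L ! (?m - r') < ?L ! (?m - r)"
  proof (intro ballI impI)
    fix r r' assume "r \<in> {1..?m}" "r' \<in> {1..?m}" "r < r'"
    then have "?m - r' < ?m - r" "?m - r < length ?L" using len by auto
    then show "?L ! (?m - r') < ?L ! (?m - r)" by (rule sorted_wrt_nth_less[OF sorted])
  qed
  show "(\<lambda>r. ?L ! (?m - r)) ` {1..?m} = P"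
  proof
    show "(\<lambda>r. ?L ! (?m - r)) ` {1..?m} \<subseteq> P"
    proof
      fix p assume "p \<in> (\<lambda>r. ?L ! (?m - r)) ` {1..?m}"
      then obtain r where "r \<in> {1..?m}" "p = ?L ! (?m - r)" by blast
      then show "p \<in> P" using nth_mem[of "?m - r" ?L] set len by simp
    qed
    show "P \<subseteq> (\<lambda>r. ?L ! (?m - r)) ` {1..?m}"
    proof
      fix p assume "p \<in> P"
      then obtain j where "j < ?m" "?L ! j = p" using set len by (metis in_set_conv_nth)
      then show "p \<in> (\<lambda>r. ?L ! (?m - r)) ` {1..?m}" by (intro image_eqI[of _ _ "?m - j"]) auto
    qed
  qed
qed

lemma rowspan_eq_if_pivots_at_lead_positions:
  assumes XF: "rowspan k B \<subseteq> Fn n" and MB: "\<forall>r\<in>{1..m}. M r \<in> rowspan k B"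
    and piv: "pivots n m M ld" and ldimg: "ld ` {1..m} = lead_positions (rowspan k B)"
  shows "rowspan m M = rowspan k B"
proof
  show "rowspan m M \<subseteq> rowspan k B"
  proof
    fix x assume "x \<in> rowspan m M"
    then obtain c where "x = (\<lambda>i. \<Sum>r\<in>{1..m}. c r * M r i)" unfolding rowspan_def by blast
    then show "x \<in> rowspan k B" using rowspan_sum[of "{1..m}" M k B c] MB by simp
  qed
  show "rowspan k B \<subseteq> rowspan m M"
  proof
    fix x assume x: "x \<in> rowspan k B"
    \<comment> \<open>subtracting the rows weighted by the entries of \<open>x\<close> at the pivots clears all leading positions\<close>
    let ?s = "\<lambda>i. \<Sum>r\<in>{1..m}. x (ld r) * M r i"
    have d: "(\<lambda>i. x i - ?s i) \<in> rowspan k B" by (rule rowspan_diff[OF x rowspan_sum[OF _ MB]]) simp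
    have z: "\<forall>p\<in>lead_positions (rowspan k B). x p - ?s p = 0"
    proof
      fix p assume "p \<in> lead_positions (rowspan k B)"
      then obtain s where "s \<in> {1..m}" "p = ld s" using ldimg by blast
      then show "x p - ?s p = 0" using pivots_coeff[OF piv, of s "\<lambda>r. x (ld r)"] by simp
    qed
    have "(\<lambda>i. x i - ?s i) = (\<lambda>i. 0)" by (rule rowspan_eq_0_if_zero_on_lead_positions[OF XF d z])
    then have "x = ?s" by (metis (mono_tags) eq_iff_diff_eq_0)
    then show "x \<in> rowspan m M" unfolding rowspan_def by (intro CollectI exI[of _ "\<lambda>r. x (ld r)"])
  qed
qed

lemma exists_rref:
  assumes XG: "X \<in> Gq n k"
  shows "\<exists>M :: nat \<Rightarrow> nat \<Rightarrow> 'a::{finite,field}. is_RREF n k M \<and> rowspan k M = X"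
proof -
  obtain B :: "nat \<Rightarrow> nat \<Rightarrow> 'a" where X: "X = rowspan k B" and BF: "\<forall>r\<in>{1..k}. B r \<in> Fn n"
    and BI: "lin_indep k B"
    using XG unfolding Gq_def by blast
  have XF: "X \<subseteq> Fn n" using rowspan_subset_Fn[OF BF] X by blast
  define P where "P = lead_positions X"
  have finP: "finite P" unfolding P_def using lead_positions_subset[OF XF] finite_subset by blast
  define m where "m = card P"
  obtain ld where ldimg: "ld ` {1..m} = P" and ldmono: "\<forall>r\<in>{1..m}. \<forall>r'\<in>{1..m}. r < r' \<longrightarrow> ld r' < ld r"
    using exists_decreasing_enumeration[OF finP] unfolding m_def by blast
  have ldinj: "r = r'" if "r \<in> {1..m}" "r' \<in> {1..m}" "ld r = ld r'" for r r'
    using ldmono that by (metis less_irrefl nat_neq_iff)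
  define g where "g p = (SOME x. x \<in> X \<and> x p = 1 \<and> (\<forall>i>p. x i = 0) \<and> (\<forall>p'\<in>P. p' \<noteq> p \<longrightarrow> x p' = 0))" for p
  have gg: "g p \<in> X \<and> g p p = 1 \<and> (\<forall>i>p. g p i = 0) \<and> (\<forall>p'\<in>P. p' \<noteq> p \<longrightarrow> g p p' = 0)" if "p \<in> P" for p
  proof -
    have "\<exists>x. x \<in> X \<and> x p = 1 \<and> (\<forall>i>p. x i = 0) \<and> (\<forall>p'\<in>P. p' \<noteq> p \<longrightarrow> x p' = 0)"
      using exists_reduced_vector[of k B p] finP that unfolding X P_def by blast
    then show ?thesis unfolding g_def by (rule someI_ex)
  qed
  define M where "M r i = (if r \<in> {1..m} then g (ld r) i else 0)" for r i
  have MX: "M r \<in> X" if "r \<in> {1..m}" for r using gg[of "ld r"] ldimg that unfolding M_def by auto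
  have in_box: "in_box n m M" unfolding in_box_def
  proof (intro allI impI)
    fix r i assume "r \<notin> {1..m} \<or> i \<notin> {1..n}"
    show "M r i = 0"
    proof (cases "r \<in> {1..m}")
      case True
      then have "M r \<in> Fn n" using MX XF by blast
      then show ?thesis using Fn_nonzero \<open>r \<notin> {1..m} \<or> i \<notin> {1..n}\<close> True by blast
    qed (auto simp: M_def)
  qed
  have piv: "pivots n m M ld" unfolding pivots_def
  proof (intro conjI ballI allI impI)
    fix r assume r: "r \<in> {1..m}"
    then have ldr: "ld r \<in> P" using ldimg by blast
    show "ld r \<in> {1..n}" using ldr lead_positions_subset[OF XF] unfolding P_def by blast
    show "M r (ld r) = 1" "\<And>i. ld r < i \<Longrightarrow> M r i = 0" using gg[OF ldr] r unfolding M_def by auto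
    fix r' assume r': "r' \<in> {1..m}" "r' \<noteq> r"
    have "ld r' \<in> P" "ld r \<noteq> ld r'" using ldimg ldinj[OF r r'(1)] r' by auto
    then show "M r' (ld r) = 0" using gg[of "ld r'"] ldr r'(1) unfolding M_def by simp
  qed (use ldmono in blast)
  have "\<forall>r\<in>{1..m}. M r \<in> rowspan k B" using MX X by simp
  then have span: "rowspan m M = X"
    using rowspan_eq_if_pivots_at_lead_positions[OF XF[unfolded X] _ piv] ldimg unfolding X P_def by blast
  have "card X = card (UNIV :: 'a set) ^ k" using card_rowspan[OF BI] X by simp
  moreover have "card X = card (UNIV :: 'a set) ^ m" using card_rowspan[OF pivots_lin_indep[OF piv]] span by simp
  moreover have "card (UNIV :: 'a set) > 1" using card_UNIV_field_ge_2[where 'a='a] by linarith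
  ultimately have "m = k" by simp
  then show ?thesis using in_box piv span unfolding is_RREF_iff by blast
qed


lemma RE_rowspan: assumes "is_RREF n k M" shows "RE n k (rowspan k M) = M"
  unfolding RE_def
proof (rule the_equality)
  show "is_RREF n k M \<and> rowspan k M = rowspan k M" using assms by simp
  fix M' assume "is_RREF n k M' \<and> rowspan k M' = rowspan k M"
  then show "M' = M" using rref_unique[OF assms, of M'] by simp
qed

lemma vvec_eq_pivot_flag: "vvec n k X = pivot_flag k (RE n k X)"
  by (rule ext) (simp add: vvec_def pivot_flag_def)
lemma wsum_eq_pivot_count: "wsum n k X = pivot_count k (RE n k X)"
  by (rule ext) (simp add: wsum_def pivot_count_def vvec_eq_pivot_flag)
lemma colX_val_eq_col_value: "colX_val q enc n k X = col_value q enc k (RE n k X)"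
  by (rule ext) (simp add: colX_val_def col_value_def)
lemma ext_less_eq_rref_less: "ext_less q enc n k Y X = rref_less q enc n k (RE n k Y) (RE n k X)"
  unfolding ext_less_def rref_less_def ext_col_differ_def col_differ_def ext_colval_def ext_col_value_def vvec_eq_pivot_flag colX_val_eq_col_value ..

lemma Gq_eq_rowspan_image: "(Gq n k :: (nat \<Rightarrow> 'a::{finite,field}) set set) = rowspan k ` rrefs n k"
proof
  show "(Gq n k :: (nat \<Rightarrow> 'a) set set) \<subseteq> rowspan k ` rrefs n k"
  proof
    fix X :: "(nat \<Rightarrow> 'a) set" assume "X \<in> Gq n k"
    then obtain M :: "nat \<Rightarrow> nat \<Rightarrow> 'a" where "is_RREF n k M" "rowspan k M = X" using exists_rref by blast
    then show "X \<in> rowspan k ` rrefs n k" unfolding rrefs_def by blast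
  qed
  show "rowspan k ` rrefs n k \<subseteq> (Gq n k :: (nat \<Rightarrow> 'a) set set)"
    using rowspan_rref_in_Gq unfolding rrefs_def by blast
qed

lemma inj_on_rowspan_rrefs: "inj_on (rowspan k) (rrefs n k)"
  by (rule inj_onI) (use rref_unique in \<open>auto simp: rrefs_def\<close>)

lemma card_Gq_less:
  assumes "M \<in> rrefs n k"
  shows "card {Y \<in> (Gq n k :: (nat \<Rightarrow> 'a::{finite,field}) set set). ext_less q enc n k Y (rowspan k M)}
       = card {N \<in> rrefs n k. rref_less q enc n k N M}"
proof -
  have RE: "RE n k (rowspan k N) = N" if "N \<in> rrefs n k" for N
    using RE_rowspan that unfolding rrefs_def by blast
  have "ext_less q enc n k (rowspan k N) (rowspan k M) \<longleftrightarrow> rref_less q enc n k N M" if "N \<in> rrefs n k" for N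
    using RE[OF that] RE[OF assms] by (simp add: ext_less_eq_rref_less)
  then have "{Y \<in> Gq n k. ext_less q enc n k Y (rowspan k M)} = rowspan k ` {N \<in> rrefs n k. rref_less q enc n k N M}"
    unfolding Gq_eq_rowspan_image by blast
  moreover have "inj_on (rowspan k) {N \<in> rrefs n k. rref_less q enc n k N M}"
    by (rule inj_on_subset[OF inj_on_rowspan_rrefs]) blast
  ultimately show ?thesis by (simp add: card_image)
qed

theorem theorem3:
  fixes enc :: "'a::{finite,field} \<Rightarrow> nat" and q n k :: nat and X :: "(nat \<Rightarrow> 'a) set"
  assumes "q = card (UNIV :: 'a set)"
    and "bij_betw enc UNIV {0..<q}" and "enc 0 = 0" and "enc 1 = 1"
    and "k \<le> n"
    and "X \<in> Gq n k"
  shows "real (card {Y \<in> Gq n k. ext_less q enc n k Y X}) =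
    (\<Sum>j\<in>{1..n}.
       (real (vvec n k X j) * real q ^ (k - wsum n k X (j - 1))
        + (1 - real (vvec n k X j)) * real (colX_val q enc n k X j) / real q ^ (wsum n k X (j - 1)))
       * gauss q (n - j) (int k - int (wsum n k X (j - 1))))"
proof -
  interpret field_encoding enc q by unfold_locales (use assms in auto)
  obtain M where M: "M \<in> rrefs n k" and X: "X = rowspan k M"
    using assms(6) Gq_eq_rowspan_image by blast
  have "RE n k X = M" using RE_rowspan M X unfolding rrefs_def by blast
  then show ?thesis
    using card_Gq_less[OF M] card_rref_less[OF M] unfolding X rank_term_def vvec_eq_pivot_flag
      wsum_eq_pivot_count colX_val_eq_col_value by simp
qed

end
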